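(* Let $\{u_0^\nu\}_{\nu>0}\subset L^2(\mathbb{T}^2)$ be divergence-free vector fields such that the vorticities $\omega_0^\nu:=\operatorname{curl} u_0^\nu$ satisfy $\sup_{\nu>0}\|\omega_0^\nu\|_{\mathcal M(\mathbb{T}^2)}<\infty$. For each $\nu>0$ let $\omega^\nu$ be the (Leray) solution of the two-dimensional incompressible Navier--Stokes equations in vorticity form $$\partial_t\omega^\nu+u^\nu\cdot\nabla\omega^\nu=\nu\Delta\omega^\nu,\quad \operatorname{curl}u^\nu=\omega^\nu,\quad \omega^\nu(\cdot,0)=\omega_0^\nu$$ on $\mathbb{T}^2\times[0,\infty)$, and set $$\mathbb{M}_\omega(r):=\sup_{x\in\mathbb{T}^2,\ \nu>0,\ t>0}\int_{B_r(x)}|\omega^\nu(y,t)|\,dy,\qquad r>0.$$ (a) If there are $\alpha\in(0,2)$ and $C>0$ with $\mathbb{M}_\omega(r)\le C r^\alpha$ for all $r>0$, then there is a constant $C'>0$, independent of $\nu,t,T$, such that for all $\nu>0$ and all $t,T>0$ with $\nu t<1$ and $\nu T<1$, $$\|\omega^\nu(t)\|_{L^2}^2\le \frac{C'}{(\nu t)^{\frac{2-\alpha}{2}}}\qquad\text{and}\qquad \nu\int_0^T\|\omega^\nu(\tau)\|_{L^2}^2\,d\tau\le C'(\nu T)^{\frac{\alpha}{2}}.$$ (b) If there is $C>0$ with $\mathbb{M}_\omega(r)\le C|\log r|^{-1/2}$ for all $r\in(0,\tfrac12)$, then there is a constant $C'>0$, independent of $\nu,t$, such that $$\|\omega^\nu(t)\|_{L^2}^2\le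 \frac{C'}{\nu t\sqrt{|\log(\nu t)|}}$$ for all $\nu>0$ and all $t>0$ with $\nu t<1$. In particular, there is $C''>0$ such that for every $\delta>0$, $$\nu\int_\delta^T\|\omega^\nu(\tau)\|_{L^2}^2\,d\tau\le C''\,\frac{\log\frac{T}{\delta}}{\sqrt{|\log(\nu T)|}}$$ for all $\nu>0$ and all $T>\delta$ with $\nu T<1$, with $C''$ independent of $\nu,\delta,T$.
   Context: $\mathbb{T}^2$ is the two-dimensional flat torus and $\mathcal M(\mathbb{T}^2)$ the space of finite signed Borel measures with total variation norm. The velocity $u^\nu$ is the unique divergence-free field with $\operatorname{curl}u^\nu=\omega^\nu$ and spatial average equal to that of $u_0^\nu$. For such data the solutions exist globally, are unique and smooth for positive times. $B_r(x)$ denotes the ball of radius $r$ centered at $x$ in $\mathbb{T}^2$. *)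

theory Defs
  imports "HOL-Analysis.Analysis"
begin

text \<open>The torus T2 = R2 / Z2 (period 1). Space points are
  x :: real \<times> real, space-time points are (x, t) :: (real \<times> real) \<times> real.
  Functions on the torus are 1-periodic functions on R2; integrals over
  the torus are integrals over the fundamental cell Q = [0,1]2.\<close>

definition dd :: "'a::real_normed_vector \<Rightarrow> ('a \<Rightarrow> real) \<Rightarrow> 'a \<Rightarrow> real" where
  "dd v f p = deriv (\<lambda>s. f (p + s *\<^sub>R v)) 0"

fun dds :: "'a::real_normed_vector list \<Rightarrow> ('a \<Rightarrow> real) \<Rightarrow> 'a \<Rightarrow> real" where
  "dds [] f = f"
| "dds (v # vs) f = dd v (dds vs f)"

definition smooth_on :: "'a::euclidean_space set \<Rightarrow> ('a \<Rightarrow> real) \<Rightarrow> bool" where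
  "smooth_on S f \<longleftrightarrow>
     (\<forall>vs. set vs \<subseteq> Basis \<longrightarrow>
        continuous_on S (dds vs f) \<and>
        (\<forall>v\<in>Basis. \<forall>p\<in>S. (\<lambda>s::real. dds vs f (p + s *\<^sub>R v)) differentiable (at 0)))"

definition periodic2 :: "(real \<times> real \<Rightarrow> 'b) \<Rightarrow> bool" where
  "periodic2 f \<longleftrightarrow> (\<forall>x. f (x + (1, 0)) = f x \<and> f (x + (0, 1)) = f x)"

definition cellQ :: "(real \<times> real) set" where
  "cellQ = cbox (0, 0) (1, 1)"

definition tdist :: "real \<times> real \<Rightarrow> real \<times> real \<Rightarrow> real" where
  "tdist x y = Inf {dist x (y + (real_of_int a, real_of_int b)) | a b. True}"

definition tball :: "real \<times> real \<Rightarrow> real \<Rightarrow> (real \<times> real) set" where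
  "tball x r = {y \<in> cellQ. tdist x y < r}"

definition test_fun :: "(real \<times> real \<Rightarrow> real) \<Rightarrow> bool" where
  "test_fun \<phi> \<longleftrightarrow> smooth_on UNIV \<phi> \<and> periodic2 \<phi>"

definition L2_divfree :: "(real \<times> real \<Rightarrow> real \<times> real) \<Rightarrow> bool" where
  "L2_divfree u0 \<longleftrightarrow>
     u0 \<in> borel_measurable borel \<and> periodic2 u0 \<and>
     (\<integral>\<^sup>+ x\<in>cellQ. ennreal ((norm (u0 x))\<^sup>2) \<partial>lborel) < \<infinity> \<and>
     (\<forall>\<phi>. test_fun \<phi> \<longrightarrow>
        (LINT x:cellQ|lborel. fst (u0 x) * dd (1,0) \<phi> x + snd (u0 x) * dd (0,1) \<phi> x) = 0)"

text \<open>Action of the distributional vorticity curl u0 = d1 u02 - d2 u01 on a test function.\<close>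
definition curl_pair :: "(real \<times> real \<Rightarrow> real \<times> real) \<Rightarrow> (real \<times> real \<Rightarrow> real) \<Rightarrow> real" where
  "curl_pair u0 \<phi> =
     (LINT x:cellQ|lborel. fst (u0 x) * dd (0,1) \<phi> x - snd (u0 x) * dd (1,0) \<phi> x)"

text \<open>curl u0 is a finite measure with total variation norm at most K
  (dual characterisation of the total variation norm).\<close>
definition vort_TV_le :: "(real \<times> real \<Rightarrow> real \<times> real) \<Rightarrow> real \<Rightarrow> bool" where
  "vort_TV_le u0 K \<longleftrightarrow>
     (\<forall>\<phi>. test_fun \<phi> \<and> (\<forall>x. \<bar>\<phi> x\<bar> \<le> 1) \<longrightarrow> \<bar>curl_pair u0 \<phi>\<bar> \<le> K)"

text \<open>The (unique, smooth for t > 0) solution of 2D Navier-Stokes in vorticity form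
  with viscosity nu and initial velocity u0: u is the velocity, om = curl u the
  vorticity; u has the spatial mean of u0 and u(t) tends to u0 in L2 as t tends to 0.\<close>
definition NS_sol :: "real \<Rightarrow> (real \<times> real \<Rightarrow> real \<times> real)
     \<Rightarrow> ((real \<times> real) \<times> real \<Rightarrow> real \<times> real) \<Rightarrow> ((real \<times> real) \<times> real \<Rightarrow> real) \<Rightarrow> bool" where
  "NS_sol \<nu> u0 u om \<longleftrightarrow>
     (let D = {p. snd p > 0}; u1 = (\<lambda>p. fst (u p)); u2 = (\<lambda>p. snd (u p));
          e1 = ((1, 0), 0) :: (real \<times> real) \<times> real;
          e2 = ((0, 1), 0) :: (real \<times> real) \<times> real;
          et = ((0, 0), 1) :: (real \<times> real) \<times> real
      in smooth_on D u1 \<and> smooth_on D u2 \<and> smooth_on D om \<and>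
         (\<forall>t. periodic2 (\<lambda>x. u (x, t)) \<and> periodic2 (\<lambda>x. om (x, t))) \<and>
         (\<forall>p\<in>D. om p = dd e1 u2 p - dd e2 u1 p \<and>
                 dd e1 u1 p + dd e2 u2 p = 0 \<and>
                 dd et om p + u1 p * dd e1 om p + u2 p * dd e2 om p
                   = \<nu> * (dd e1 (dd e1 om) p + dd e2 (dd e2 om) p)) \<and>
         (\<forall>t>0. (LINT x:cellQ|lborel. u (x, t)) = (LINT x:cellQ|lborel. u0 x)) \<and>
         ((\<lambda>t. \<integral>\<^sup>+ x\<in>cellQ. ennreal ((norm (u (x, t) - u0 x))\<^sup>2) \<partial>lborel)
            \<longlongrightarrow> 0) (at_right 0))"

definition L2sq :: "((real \<times> real) \<times> real \<Rightarrow> real) \<Rightarrow> real \<Rightarrow> ennreal" where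
  "L2sq om t = (\<integral>\<^sup>+ y\<in>cellQ. ennreal ((om (y, t))\<^sup>2) \<partial>lborel)"

definition ball_mass :: "((real \<times> real) \<times> real \<Rightarrow> real) \<Rightarrow> real \<Rightarrow> real \<times> real \<Rightarrow> real \<Rightarrow> ennreal" where
  "ball_mass om t x r = (\<integral>\<^sup>+ y\<in>tball x r. ennreal \<bar>om (y, t)\<bar> \<partial>lborel)"

end

theory Submission
  imports Defs
begin

text \<open>The enstrophy Y(t) = ||omega(t)||^2 satisfies Y' = -2 nu ||grad omega||^2, since transport
  by the divergence-free velocity conserves it. Applying the Poincare inequality on the squares
  of a grid of mesh about r bounds Y by a constant times M(r) ||omega||_1 / r^2 + r^2 ||grad omega||^2,
  where M(r) is the maximal mass of a ball of radius r, and M(1/3) bounds ||omega||_1. Choosing r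
  so that the first term is Y / 2 bounds the dissipation from below by a function of Y, and the
  resulting differential inequality integrates to the pointwise bounds; integrating those in
  time gives the others.\<close>

section \<open>Poincare inequalities on intervals and squares\<close>

lemma integral_square_eq_variance:
  fixes f :: "'a::euclidean_space \<Rightarrow> real"
  assumes f: "f integrable_on cbox a b" and f2: "(\<lambda>x. (f x)\<^sup>2) integrable_on cbox a b"
    and c: "Henstock_Kurzweil_Integration.content (cbox a b) > 0"
  defines "m \<equiv> integral (cbox a b) f / Henstock_Kurzweil_Integration.content (cbox a b)"
  shows "integral (cbox a b) (\<lambda>x. (f x)\<^sup>2)
           = integral (cbox a b) (\<lambda>x. (f x - m)\<^sup>2) + (integral (cbox a b) f)\<^sup>2 / Henstock_Kurzweil_Integration.content (cbox a b)"
proof -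
  let ?I = "integral (cbox a b) f" and ?c = "Henstock_Kurzweil_Integration.content (cbox a b)"
  have "((\<lambda>x. (f x)\<^sup>2 - 2 * m * f x + m\<^sup>2) has_integral
          integral (cbox a b) (\<lambda>x. (f x)\<^sup>2) - 2 * m * ?I + ?c * m\<^sup>2) (cbox a b)"
    by (intro has_integral_add has_integral_diff has_integral_mult_right integrable_integral f f2)
      (use has_integral_const[of "m\<^sup>2" a b] in simp)
  moreover have "(\<lambda>x. (f x)\<^sup>2 - 2 * m * f x + m\<^sup>2) = (\<lambda>x. (f x - m)\<^sup>2)"
    by (simp add: power2_eq_square algebra_simps)
  moreover have "2 * m * ?I - ?c * m\<^sup>2 = ?I\<^sup>2 / ?c"
    using c unfolding m_def by (simp add: field_simps power2_eq_square)
  ultimately show ?thesis by (simp add: integral_unique)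
qed

lemma square_integral_le_interval:
  fixes \<phi> :: "real \<Rightarrow> real"
  assumes ab: "a \<le> b" and c: "continuous_on {a..b} \<phi>"
  shows "(integral {a..b} \<phi>)\<^sup>2 \<le> (b - a) * integral {a..b} (\<lambda>x. (\<phi> x)\<^sup>2)"
proof (cases "a = b")
  case False
  then have ba: "Henstock_Kurzweil_Integration.content {a..b} > 0" using ab by simp
  have "0 \<le> integral {a..b} (\<lambda>x. (\<phi> x - integral {a..b} \<phi> / Henstock_Kurzweil_Integration.content {a..b})\<^sup>2)"
    by (rule integral_nonneg) (auto intro!: integrable_continuous_interval continuous_intros c)
  then have "(integral {a..b} \<phi>)\<^sup>2 / Henstock_Kurzweil_Integration.content {a..b} \<le> integral {a..b} (\<lambda>x. (\<phi> x)\<^sup>2)"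
    using integral_square_eq_variance[of \<phi> a b] ba
    by (simp add: integrable_continuous_interval continuous_intros c)
  then show ?thesis using ab ba by (simp add: field_simps)
qed simp

lemma abs_diff_le_integral_abs_deriv:
  fixes g g' :: "real \<Rightarrow> real"
  assumes cg': "continuous_on {a..b} g'"
    and d: "\<And>x. x \<in> {a..b} \<Longrightarrow> (g has_real_derivative g' x) (at x)"
    and u: "u \<in> {a..b}" and s: "s \<in> {a..b}"
  shows "\<bar>g s - g u\<bar> \<le> integral {a..b} (\<lambda>x. \<bar>g' x\<bar>)"
proof -
  have ia: "(\<lambda>x. \<bar>g' x\<bar>) integrable_on {c..e}" if "a \<le> c" "e \<le> b" for c e
    using that by (intro integrable_continuous_interval continuous_intros continuous_on_subset[OF cg']) auto
  have *: "\<bar>g s - g u\<bar> \<le> integral {a..b} (\<lambda>x. \<bar>g' x\<bar>)"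
    if u: "u \<in> {a..b}" and s: "s \<in> {a..b}" and "u \<le> s" for u s
  proof -
    have hi: "(g' has_integral (g s - g u)) {u..s}"
      using u s \<open>u \<le> s\<close> d by (intro fundamental_theorem_of_calculus)
        (auto simp: has_real_derivative_iff_has_vector_derivative intro: has_vector_derivative_at_within)
    have "\<bar>g s - g u\<bar> = norm (integral {u..s} g')" using hi by (simp add: integral_unique)
    also have "\<dots> \<le> integral {u..s} (\<lambda>x. \<bar>g' x\<bar>)"
      by (rule Henstock_Kurzweil_Integration.integral_norm_bound_integral)
        (use hi ia u s in auto)
    also have "\<dots> \<le> integral {a..b} (\<lambda>x. \<bar>g' x\<bar>)"
      by (rule integral_subset_le) (use ia u s in auto)
    finally show ?thesis .
  qed
  show ?thesis using *[OF u s] *[OF s u] by (cases "u \<le> s") auto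
qed

lemma abs_diff_average_le:
  fixes g :: "real \<Rightarrow> real"
  assumes ab: "a < b" and ig: "g integrable_on {a..b}"
    and osc: "\<And>x. x \<in> {a..b} \<Longrightarrow> \<bar>g s - g x\<bar> \<le> V"
  shows "\<bar>g s - integral {a..b} g / (b - a)\<bar> \<le> V"
proof -
  have "integral {a..b} (\<lambda>x. g s - V) \<le> integral {a..b} g"
    by (rule integral_le) (use ig osc in \<open>force+\<close>)
  moreover have "integral {a..b} g \<le> integral {a..b} (\<lambda>x. g s + V)"
    by (rule integral_le) (use ig osc in \<open>force+\<close>)
  ultimately show ?thesis using ab by (simp add: abs_le_iff field_simps)
qed

lemma poincare_interval:
  fixes g g' :: "real \<Rightarrow> real"
  assumes ab: "a \<le> b" and cg': "continuous_on {a..b} g'"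
    and d: "\<And>x. x \<in> {a..b} \<Longrightarrow> (g has_real_derivative g' x) (at x)"
  shows "integral {a..b} (\<lambda>x. (g x - integral {a..b} g / (b - a))\<^sup>2)
           \<le> (b - a)\<^sup>2 * integral {a..b} (\<lambda>x. (g' x)\<^sup>2)"
proof (cases "a = b")
  case False
  then have ba: "a < b" using ab by simp
  have cg: "continuous_on {a..b} g"
    using d by (meson DERIV_isCont continuous_at_imp_continuous_on)
  define V where "V = integral {a..b} (\<lambda>x. \<bar>g' x\<bar>)"
  define m where "m = integral {a..b} g / (b - a)"
  have mb: "\<bar>g s - m\<bar> \<le> V" if "s \<in> {a..b}" for s
    unfolding m_def V_def using that
    by (intro abs_diff_average_le ba integrable_continuous_interval cg abs_diff_le_integral_abs_deriv cg' d)
  have "integral {a..b} (\<lambda>x. (g x - m)\<^sup>2) \<le> integral {a..b} (\<lambda>x. V\<^sup>2)"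
  proof (rule integral_le)
    fix x assume "x \<in> {a..b}"
    from power_mono[OF mb[OF this] abs_ge_zero, of 2] show "(g x - m)\<^sup>2 \<le> V\<^sup>2"
      by simp
  qed (intro integrable_continuous_interval continuous_intros cg)+
  also have "\<dots> = (b - a) * V\<^sup>2" using ab by simp
  also have "\<dots> \<le> (b - a) * ((b - a) * integral {a..b} (\<lambda>x. (\<bar>g' x\<bar>)\<^sup>2))"
    using square_integral_le_interval[OF ab, of "\<lambda>x. \<bar>g' x\<bar>"] ba unfolding V_def
    by (intro mult_left_mono) (auto intro: continuous_intros cg')
  finally show ?thesis unfolding m_def by (simp add: power2_eq_square mult.assoc)
qed simp

lemma integrable_continuous_UNIV:
  "continuous_on UNIV (g::'a::euclidean_space \<Rightarrow> real) \<Longrightarrow> g integrable_on cbox a b"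
  by (rule integrable_continuous) (rule continuous_on_subset, auto)

lemma continuous_on_slices:
  fixes f :: "real \<times> real \<Rightarrow> real"
  assumes "continuous_on UNIV f"
  shows "continuous_on UNIV (\<lambda>y. f (x, y))" "continuous_on UNIV (\<lambda>y. f (y, x))"
  by (auto intro!: continuous_on_compose2[OF assms] continuous_intros)

lemma integral_cbox_iterated:
  fixes f :: "real \<times> real \<Rightarrow> real"
  assumes "continuous_on UNIV f"
  shows "integral (cbox (a,c) (b,d)) f = integral {a..b} (\<lambda>x. integral {c..d} (\<lambda>y. f (x,y)))"
  using integral_prod_continuous[of a c b d f] assms continuous_on_subset by fastforce

lemma integral_cbox_iterated_swap:
  fixes f :: "real \<times> real \<Rightarrow> real"
  assumes cf: "continuous_on UNIV f"
  shows "integral (cbox (a,c) (b,d)) f = integral {c..d} (\<lambda>y. integral {a..b} (\<lambda>x. f (x,y)))"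
proof -
  have "integral (cbox (a,c) (b,d)) f = integral (cbox a b) (\<lambda>x. integral (cbox c d) (\<lambda>y. f (x,y)))"
    using integral_cbox_iterated[OF cf] by simp
  also have "\<dots> = integral (cbox c d) (\<lambda>y. integral (cbox a b) (\<lambda>x. f (x,y)))"
    by (rule integral_swap_continuous)
      (use continuous_on_subset[OF cf] in \<open>auto simp: case_prod_unfold\<close>)
  finally show ?thesis by simp
qed

lemma integrable_inner_integral:
  fixes f :: "real \<times> real \<Rightarrow> real"
  assumes "continuous_on UNIV f"
  shows "(\<lambda>x. integral {c..d} (\<lambda>y. f (x,y))) integrable_on {a..b}"
  using integral_integrable_2dim[of a c b d f] assms continuous_on_subset by fastforce

definition row_average :: "(real \<times> real \<Rightarrow> real) \<Rightarrow> real \<Rightarrow> real \<Rightarrow> real \<Rightarrow> real" where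
  "row_average f b r x = integral {b..b+r} (\<lambda>y. f (x,y)) / r"

lemma continuous_on_row_average:
  fixes f :: "real \<times> real \<Rightarrow> real"
  assumes "continuous_on UNIV f"
  shows "continuous_on UNIV (row_average f b r)"
proof -
  have "continuous_on UNIV (\<lambda>x. integral {b..b+r} (\<lambda>y. f (x,y)))"
    using integral_continuous_on_param[of UNIV b "b+r" "\<lambda>x y. f (x,y)"] continuous_on_subset[OF assms]
    by (simp add: case_prod_unfold)
  then show ?thesis unfolding row_average_def divide_inverse by (intro continuous_intros)
qed

lemma has_real_derivative_row_average:
  fixes f f1 :: "real \<times> real \<Rightarrow> real"
  assumes cf: "continuous_on UNIV f" and cf1: "continuous_on UNIV f1"
    and d1: "\<And>x1 x2. ((\<lambda>s. f (s,x2)) has_real_derivative f1 (x1,x2)) (at x1)"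
  shows "(row_average f b r has_real_derivative row_average f1 b r x) (at x)"
proof -
  have "((\<lambda>x. integral (cbox b (b+r)) (\<lambda>y. f (x,y))) has_field_derivative
          integral (cbox b (b+r)) (\<lambda>y. f1 (x,y))) (at x within UNIV)"
  proof (rule leibniz_rule_field_derivative[where fx="\<lambda>x y. f1 (x,y)"])
    show "\<And>x. x \<in> UNIV \<Longrightarrow> (\<lambda>y. f (x,y)) integrable_on cbox b (b+r)"
      using continuous_on_slices(1)[OF cf] integrable_continuous_UNIV by blast
    show "continuous_on (UNIV \<times> cbox b (b+r)) (\<lambda>(x, t). f1 (x, t))"
      using continuous_on_subset[OF cf1] by (simp add: case_prod_unfold)
  qed (use d1 in auto)
  then show ?thesis unfolding row_average_def by (intro DERIV_cdivide) simp
qed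

lemma integral_square_row_average:
  fixes f :: "real \<times> real \<Rightarrow> real"
  assumes cf: "continuous_on UNIV f" and r: "r > 0"
  shows "integral (cbox (a,b) (a+r,b+r)) f = r * integral {a..a+r} (row_average f b r)"
proof -
  have "integral (cbox (a,b) (a+r,b+r)) f = integral {a..a+r} (\<lambda>x. r * row_average f b r x)"
    unfolding integral_cbox_iterated[OF cf] row_average_def using r by simp
  then show ?thesis using r by simp
qed

text \<open>Poincare on a square is proved along vertical segments for f minus its row average,
  and along the horizontal side for the row average itself.\<close>

lemma poincare_square_vertical:
  fixes f f2 :: "real \<times> real \<Rightarrow> real"
  assumes cf: "continuous_on UNIV f" and cf2: "continuous_on UNIV f2"
    and d2: "\<And>x1 x2. ((\<lambda>s. f (x1,s)) has_real_derivative f2 (x1,x2)) (at x2)"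
    and r: "r > 0"
  shows "integral (cbox (a,b) (a+r,b+r)) (\<lambda>x. (f x - row_average f b r (fst x))\<^sup>2)
           \<le> r\<^sup>2 * integral (cbox (a,b) (a+r,b+r)) (\<lambda>x. (f2 x)\<^sup>2)"
proof -
  have c: "continuous_on UNIV (\<lambda>x. (f x - row_average f b r (fst x))\<^sup>2)"
    by (intro continuous_intros cf continuous_on_compose2[OF continuous_on_row_average[OF cf]]) auto
  have "integral (cbox (a,b) (a+r,b+r)) (\<lambda>x. (f x - row_average f b r (fst x))\<^sup>2)
      = integral {a..a+r} (\<lambda>x. integral {b..b+r} (\<lambda>y. (f (x,y) - row_average f b r x)\<^sup>2))"
    using integral_cbox_iterated[OF c] by simp
  also have "\<dots> \<le> integral {a..a+r} (\<lambda>x. r\<^sup>2 * integral {b..b+r} (\<lambda>y. (f2 (x,y))\<^sup>2))"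
  proof (rule integral_le)
    show "(\<lambda>x. integral {b..b+r} (\<lambda>y. (f (x,y) - row_average f b r x)\<^sup>2)) integrable_on {a..a+r}"
      using integrable_inner_integral[OF c] by simp
    show "(\<lambda>x. r\<^sup>2 * integral {b..b+r} (\<lambda>y. (f2 (x,y))\<^sup>2)) integrable_on {a..a+r}"
      by (intro integrable_on_mult_right integrable_inner_integral continuous_intros cf2)
    fix x
    have "integral {b..b+r} (\<lambda>y. (f (x,y) - integral {b..b+r} (\<lambda>y. f (x,y)) / (b + r - b))\<^sup>2)
           \<le> (b + r - b)\<^sup>2 * integral {b..b+r} (\<lambda>y. (f2 (x,y))\<^sup>2)"
      using r by (intro poincare_interval continuous_on_subset[OF continuous_on_slices(1)[OF cf2]] d2) auto
    then show "integral {b..b+r} (\<lambda>y. (f (x,y) - row_average f b r x)\<^sup>2)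
                 \<le> r\<^sup>2 * integral {b..b+r} (\<lambda>y. (f2 (x,y))\<^sup>2)"
      unfolding row_average_def by simp
  qed
  also have "\<dots> = r\<^sup>2 * integral (cbox (a,b) (a+r,b+r)) (\<lambda>x. (f2 x)\<^sup>2)"
    by (subst integral_cbox_iterated) (auto intro: continuous_intros cf2)
  finally show ?thesis .
qed

lemma poincare_square_horizontal:
  fixes f f1 :: "real \<times> real \<Rightarrow> real"
  assumes cf: "continuous_on UNIV f" and cf1: "continuous_on UNIV f1"
    and d1: "\<And>x1 x2. ((\<lambda>s. f (s,x2)) has_real_derivative f1 (x1,x2)) (at x1)"
    and r: "r > 0"
  shows "integral (cbox (a,b) (a+r,b+r))
             (\<lambda>x. (row_average f b r (fst x) - integral (cbox (a,b) (a+r,b+r)) f / r\<^sup>2)\<^sup>2)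
           \<le> r\<^sup>2 * integral (cbox (a,b) (a+r,b+r)) (\<lambda>x. (f1 x)\<^sup>2)"
proof -
  let ?h = "row_average f b r" and ?h' = "row_average f1 b r"
  define m where "m = integral (cbox (a,b) (a+r,b+r)) f / r\<^sup>2"
  have ch': "continuous_on UNIV ?h'" by (rule continuous_on_row_average[OF cf1])
  have m_eq: "m = integral {a..a+r} ?h / (a + r - a)"
    unfolding m_def integral_square_row_average[OF cf r] using r by (simp add: power2_eq_square)
  have "integral (cbox (a,b) (a+r,b+r)) (\<lambda>x. (?h (fst x) - m)\<^sup>2)
      = r * integral {a..a+r} (\<lambda>x. (?h x - m)\<^sup>2)"
    by (subst integral_cbox_iterated)
      (use r in \<open>auto intro!: continuous_intros continuous_on_compose2[OF continuous_on_row_average[OF cf]]\<close>)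
  also have "\<dots> \<le> r * (r\<^sup>2 * integral {a..a+r} (\<lambda>x. (?h' x)\<^sup>2))"
  proof -
    have "integral {a..a+r} (\<lambda>x. (?h x - integral {a..a+r} ?h / (a + r - a))\<^sup>2)
           \<le> (a + r - a)\<^sup>2 * integral {a..a+r} (\<lambda>x. (?h' x)\<^sup>2)"
      using r by (intro poincare_interval continuous_on_subset[OF ch']
          has_real_derivative_row_average[OF cf cf1 d1]) auto
    then show ?thesis unfolding m_eq using r by (intro mult_left_mono) auto
  qed
  also have "\<dots> \<le> r * (r\<^sup>2 * integral {a..a+r} (\<lambda>x. integral {b..b+r} (\<lambda>y. (f1 (x,y))\<^sup>2) / r))"
  proof -
    have "integral {a..a+r} (\<lambda>x. (?h' x)\<^sup>2) \<le> integral {a..a+r} (\<lambda>x. integral {b..b+r} (\<lambda>y. (f1 (x,y))\<^sup>2) / r)"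
    proof (rule integral_le)
      show "(\<lambda>x. (?h' x)\<^sup>2) integrable_on {a..a+r}"
        by (intro integrable_continuous_interval continuous_intros continuous_on_subset[OF ch']) auto
      show "(\<lambda>x. integral {b..b+r} (\<lambda>y. (f1 (x,y))\<^sup>2) / r) integrable_on {a..a+r}"
        by (intro integrable_on_mult_left[where c="1/r", simplified] integrable_inner_integral
            continuous_intros cf1)
      fix x
      have "(integral {b..b+r} (\<lambda>y. f1 (x,y)))\<^sup>2 \<le> (b + r - b) * integral {b..b+r} (\<lambda>y. (f1 (x,y))\<^sup>2)"
        using r by (intro square_integral_le_interval continuous_on_subset[OF continuous_on_slices(1)[OF cf1]]) auto
      then show "(?h' x)\<^sup>2 \<le> integral {b..b+r} (\<lambda>y. (f1 (x,y))\<^sup>2) / r"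
        unfolding row_average_def using r by (simp add: power_divide power2_eq_square field_simps)
    qed
    then show ?thesis using r by (intro mult_left_mono) auto
  qed
  also have "\<dots> = r\<^sup>2 * integral (cbox (a,b) (a+r,b+r)) (\<lambda>x. (f1 x)\<^sup>2)"
  proof -
    have "integral (cbox (a,b) (a+r,b+r)) (\<lambda>x. (f1 x)\<^sup>2)
        = integral {a..a+r} (\<lambda>x. integral {b..b+r} (\<lambda>y. (f1 (x,y))\<^sup>2))"
      by (intro integral_cbox_iterated continuous_intros cf1)
    then show ?thesis using r by (simp add: power2_eq_square)
  qed
  finally show ?thesis unfolding m_def .
qed

lemma poincare_square:
  fixes f f1 f2 :: "real \<times> real \<Rightarrow> real"
  assumes cf: "continuous_on UNIV f" and cf1: "continuous_on UNIV f1" and cf2: "continuous_on UNIV f2"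
    and d1: "\<And>x1 x2. ((\<lambda>s. f (s,x2)) has_real_derivative f1 (x1,x2)) (at x1)"
    and d2: "\<And>x1 x2. ((\<lambda>s. f (x1,s)) has_real_derivative f2 (x1,x2)) (at x2)"
    and r: "r > 0"
  shows "integral (cbox (a,b) (a+r,b+r)) (\<lambda>x. (f x - integral (cbox (a,b) (a+r,b+r)) f / r\<^sup>2)\<^sup>2)
    \<le> 2 * r\<^sup>2 * (integral (cbox (a,b) (a+r,b+r)) (\<lambda>x. (f1 x)\<^sup>2) + integral (cbox (a,b) (a+r,b+r)) (\<lambda>x. (f2 x)\<^sup>2))"
proof -
  define S where "S = cbox (a,b) (a+r,b+r)"
  define m where "m = integral S f / r\<^sup>2"
  let ?h = "row_average f b r"
  have ch: "continuous_on UNIV (\<lambda>x. ?h (fst x))"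
    by (intro continuous_on_compose2[OF continuous_on_row_average[OF cf]] continuous_intros) auto
  have c1: "continuous_on UNIV (\<lambda>x. (f x - ?h (fst x))\<^sup>2)"
    and c2: "continuous_on UNIV (\<lambda>x. (?h (fst x) - m)\<^sup>2)"
    by (intro continuous_intros cf ch)+
  have i0: "(\<lambda>x. (f x - m)\<^sup>2) integrable_on S"
    and i1: "(\<lambda>x. (f x - ?h (fst x))\<^sup>2) integrable_on S"
    and i2: "(\<lambda>x. (?h (fst x) - m)\<^sup>2) integrable_on S"
    unfolding S_def by (intro integrable_continuous_UNIV continuous_intros cf c1 c2)+
  have "integral S (\<lambda>x. (f x - m)\<^sup>2) \<le> integral S (\<lambda>x. 2 * (f x - ?h (fst x))\<^sup>2 + 2 * (?h (fst x) - m)\<^sup>2)"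
  proof (rule integral_le)
    fix x
    have "2 * (f x - ?h (fst x))\<^sup>2 + 2 * (?h (fst x) - m)\<^sup>2 - (f x - m)\<^sup>2 = (f x - 2 * ?h (fst x) + m)\<^sup>2"
      by (simp add: power2_eq_square algebra_simps)
    then show "(f x - m)\<^sup>2 \<le> 2 * (f x - ?h (fst x))\<^sup>2 + 2 * (?h (fst x) - m)\<^sup>2"
      by (metis diff_ge_0_iff_ge zero_le_power2)
  qed (intro integrable_add integrable_on_mult_right i0 i1 i2)+
  also have "\<dots> = 2 * integral S (\<lambda>x. (f x - ?h (fst x))\<^sup>2) + 2 * integral S (\<lambda>x. (?h (fst x) - m)\<^sup>2)"
    by (simp add: integral_add integrable_on_mult_right i1 i2)
  also have "\<dots> \<le> 2 * (r\<^sup>2 * integral S (\<lambda>x. (f2 x)\<^sup>2)) + 2 * (r\<^sup>2 * integral S (\<lambda>x. (f1 x)\<^sup>2))"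
    using poincare_square_vertical[OF cf cf2 d2 r, of a b] poincare_square_horizontal[OF cf cf1 d1 r, of a b]
    unfolding S_def m_def by linarith
  finally show ?thesis unfolding S_def m_def by (simp add: algebra_simps)
qed

lemma square_integral_le_mass_gradient:
  fixes f f1 f2 :: "real \<times> real \<Rightarrow> real"
  assumes cf: "continuous_on UNIV f" and cf1: "continuous_on UNIV f1" and cf2: "continuous_on UNIV f2"
    and d1: "\<And>x1 x2. ((\<lambda>s. f (s,x2)) has_real_derivative f1 (x1,x2)) (at x1)"
    and d2: "\<And>x1 x2. ((\<lambda>s. f (x1,s)) has_real_derivative f2 (x1,x2)) (at x2)"
    and r: "r > 0"
  shows "integral (cbox (a,b) (a+r,b+r)) (\<lambda>x. (f x)\<^sup>2)
    \<le> (integral (cbox (a,b) (a+r,b+r)) (\<lambda>x. \<bar>f x\<bar>))\<^sup>2 / r\<^sup>2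
       + 2 * r\<^sup>2 * (integral (cbox (a,b) (a+r,b+r)) (\<lambda>x. (f1 x)\<^sup>2) + integral (cbox (a,b) (a+r,b+r)) (\<lambda>x. (f2 x)\<^sup>2))"
proof -
  define S where "S = cbox (a,b) (a+r,b+r)"
  have cS: "Henstock_Kurzweil_Integration.content S = r\<^sup>2"
    unfolding S_def using r by (simp add: content_Pair power2_eq_square)
  have "\<bar>integral S f\<bar> \<le> integral S (\<lambda>x. \<bar>f x\<bar>)" unfolding S_def
    using Henstock_Kurzweil_Integration.integral_norm_bound_integral[OF integrable_continuous_UNIV[OF cf]
        integrable_continuous_UNIV[of "\<lambda>x. \<bar>f x\<bar>"]] continuous_on_rabs[OF cf]
    by auto
  then have "(integral S f)\<^sup>2 \<le> (integral S (\<lambda>x. \<bar>f x\<bar>))\<^sup>2"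
    by (metis abs_ge_zero abs_le_square_iff abs_of_nonneg order_trans)
  then have "(integral S f)\<^sup>2 / r\<^sup>2 \<le> (integral S (\<lambda>x. \<bar>f x\<bar>))\<^sup>2 / r\<^sup>2"
    by (intro divide_right_mono) auto
  moreover have "integral S (\<lambda>x. (f x)\<^sup>2) = integral S (\<lambda>x. (f x - integral S f / r\<^sup>2)\<^sup>2) + (integral S f)\<^sup>2 / r\<^sup>2"
    using integral_square_eq_variance[of f "(a,b)" "(a+r,b+r)"] cS r unfolding S_def
    by (simp add: integrable_continuous_UNIV continuous_intros cf)
  ultimately show ?thesis
    using poincare_square[OF cf cf1 cf2 d1 d2 r, of a b] unfolding S_def by linarith
qed

lemma integral_unit_interval_split:
  fixes h :: "real \<Rightarrow> real"
  assumes h: "h integrable_on {0..1}" and n: "n > 0"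
  shows "integral {0..1} h = (\<Sum>k<n. integral {real k / n..real (Suc k) / n} h)"
proof -
  have "integral {0..real m / n} h = (\<Sum>k<m. integral {real k / n..real (Suc k) / n} h)"
    if "m \<le> n" for m
    using that
  proof (induction m)
    case (Suc m)
    have "integral {0..real m / n} h + integral {real m / n..real (Suc m) / n} h
        = integral {0..real (Suc m) / n} h"
      using Suc.prems n
      by (intro Henstock_Kurzweil_Integration.integral_combine integrable_on_subinterval[OF h])
        (auto simp: field_simps)
    then show ?case using Suc by simp
  qed simp
  from this[of n] n show ?thesis by simp
qed

definition grid_cell :: "nat \<Rightarrow> nat \<Rightarrow> nat \<Rightarrow> (real \<times> real) set" where
  "grid_cell n i j = cbox (real i / n, real j / n) (real (Suc i) / n, real (Suc j) / n)"

lemma integral_unit_square_grid: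
  fixes g :: "real \<times> real \<Rightarrow> real"
  assumes cg: "continuous_on UNIV g" and n: "n > 0"
  shows "integral (cbox (0,0) (1,1)) g = (\<Sum>i<n. \<Sum>j<n. integral (grid_cell n i j) g)"
proof -
  have "integral (cbox (0,0) (1,1)) g = integral {0..1} (\<lambda>x. integral {0..1} (\<lambda>y. g (x,y)))"
    by (rule integral_cbox_iterated[OF cg])
  also have "\<dots> = integral {0..1} (\<lambda>x. \<Sum>j<n. integral {real j / n..real (Suc j) / n} (\<lambda>y. g (x,y)))"
    by (intro integral_cong integral_unit_interval_split n integrable_continuous_interval
        continuous_on_subset[OF continuous_on_slices(1)[OF cg]]) auto
  also have "\<dots> = (\<Sum>j<n. integral {0..1} (\<lambda>x. integral {real j / n..real (Suc j) / n} (\<lambda>y. g (x,y))))"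
    by (intro integral_sum integrable_inner_integral cg) auto
  also have "\<dots> = (\<Sum>j<n. \<Sum>i<n. integral {real i / n..real (Suc i) / n}
                      (\<lambda>x. integral {real j / n..real (Suc j) / n} (\<lambda>y. g (x,y))))"
    by (intro sum.cong refl integral_unit_interval_split n integrable_inner_integral cg)
  also have "\<dots> = (\<Sum>i<n. \<Sum>j<n. integral (grid_cell n i j) g)"
    unfolding grid_cell_def by (subst sum.swap) (intro sum.cong refl integral_cbox_iterated[symmetric] cg)
  finally show ?thesis .
qed

lemma unit_square_integral_le_grid:
  fixes f f1 f2 :: "real \<times> real \<Rightarrow> real"
  assumes cf: "continuous_on UNIV f" and cf1: "continuous_on UNIV f1" and cf2: "continuous_on UNIV f2"
    and d1: "\<And>x1 x2. ((\<lambda>s. f (s,x2)) has_real_derivative f1 (x1,x2)) (at x1)"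
    and d2: "\<And>x1 x2. ((\<lambda>s. f (x1,s)) has_real_derivative f2 (x1,x2)) (at x2)"
    and n: "n > 0"
    and M: "\<And>i j. i < n \<Longrightarrow> j < n \<Longrightarrow> integral (grid_cell n i j) (\<lambda>x. \<bar>f x\<bar>) \<le> M"
  shows "integral (cbox (0,0) (1,1)) (\<lambda>x. (f x)\<^sup>2)
    \<le> (real n)\<^sup>2 * M * integral (cbox (0,0) (1,1)) (\<lambda>x. \<bar>f x\<bar>)
       + 2 / (real n)\<^sup>2 * (integral (cbox (0,0) (1,1)) (\<lambda>x. (f1 x)\<^sup>2) + integral (cbox (0,0) (1,1)) (\<lambda>x. (f2 x)\<^sup>2))"
proof -
  let ?A = "\<lambda>i j. integral (grid_cell n i j) (\<lambda>x. \<bar>f x\<bar>)"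
  let ?B = "\<lambda>i j. integral (grid_cell n i j) (\<lambda>x. (f1 x)\<^sup>2) + integral (grid_cell n i j) (\<lambda>x. (f2 x)\<^sup>2)"
  have cell: "integral (grid_cell n i j) (\<lambda>x. (f x)\<^sup>2) \<le> (real n)\<^sup>2 * M * ?A i j + 2 / (real n)\<^sup>2 * ?B i j"
    if "i < n" "j < n" for i j
  proof -
    have eq: "grid_cell n i j = cbox (real i / n, real j / n) (real i / n + 1 / n, real j / n + 1 / n)"
      unfolding grid_cell_def by (simp add: add_divide_distrib add.commute)
    have A0: "0 \<le> ?A i j" unfolding grid_cell_def
      by (rule integral_nonneg) (auto intro: integrable_continuous_UNIV continuous_intros cf)
    have "integral (grid_cell n i j) (\<lambda>x. (f x)\<^sup>2) \<le> (?A i j)\<^sup>2 / (1 / n)\<^sup>2 + 2 * (1 / n)\<^sup>2 * ?B i j"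
      unfolding eq using n by (intro square_integral_le_mass_gradient[OF cf cf1 cf2 d1 d2]) auto
    also have "(?A i j)\<^sup>2 / (1 / n)\<^sup>2 = (real n)\<^sup>2 * (?A i j * ?A i j)"
      by (simp add: power2_eq_square)
    also have "\<dots> \<le> (real n)\<^sup>2 * (M * ?A i j)"
      using A0 M[OF that] by (intro mult_left_mono mult_right_mono) auto
    finally show ?thesis by (simp add: mult.assoc power_divide)
  qed
  have "integral (cbox (0,0) (1,1)) (\<lambda>x. (f x)\<^sup>2) = (\<Sum>i<n. \<Sum>j<n. integral (grid_cell n i j) (\<lambda>x. (f x)\<^sup>2))"
    by (intro integral_unit_square_grid n continuous_intros cf)
  also have "\<dots> \<le> (\<Sum>i<n. \<Sum>j<n. (real n)\<^sup>2 * M * ?A i j + 2 / (real n)\<^sup>2 * ?B i j)"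
    by (intro sum_mono cell) auto
  also have "\<dots> = (real n)\<^sup>2 * M * (\<Sum>i<n. \<Sum>j<n. ?A i j)
      + 2 / (real n)\<^sup>2 * ((\<Sum>i<n. \<Sum>j<n. integral (grid_cell n i j) (\<lambda>x. (f1 x)\<^sup>2))
                          + (\<Sum>i<n. \<Sum>j<n. integral (grid_cell n i j) (\<lambda>x. (f2 x)\<^sup>2)))"
    by (simp add: sum.distrib sum_distrib_left distrib_left)
  also have "\<dots> = (real n)\<^sup>2 * M * integral (cbox (0,0) (1,1)) (\<lambda>x. \<bar>f x\<bar>)
       + 2 / (real n)\<^sup>2 * (integral (cbox (0,0) (1,1)) (\<lambda>x. (f1 x)\<^sup>2) + integral (cbox (0,0) (1,1)) (\<lambda>x. (f2 x)\<^sup>2))"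
    by (subst (1 2 3) integral_unit_square_grid[OF _ n]) (auto intro: continuous_intros cf cf1 cf2)
  finally show ?thesis .
qed

section \<open>The enstrophy identity\<close>

lemma integral_by_parts_periodic:
  fixes p p' q q' :: "real \<Rightarrow> real"
  assumes "\<And>x. (p has_real_derivative p' x) (at x)" "\<And>x. (q has_real_derivative q' x) (at x)"
    and "continuous_on UNIV p'" "continuous_on UNIV q'"
    and "p 1 * q 1 = p 0 * q 0"
  shows "integral {0..1} (\<lambda>x. p x * q' x) = - integral {0..1} (\<lambda>x. p' x * q x)"
proof -
  have cp: "continuous_on {0..1} p" "continuous_on {0..1} q"
    using assms(1,2) by (meson DERIV_isCont continuous_at_imp_continuous_on)+
  have i1: "(\<lambda>x. p x * q' x) integrable_on {0..1}"
    by (intro integrable_continuous_interval continuous_intros cp continuous_on_subset[OF assms(4)]) auto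
  have "((\<lambda>x. p' x * q x) has_integral (- integral {0..1} (\<lambda>x. p x * q' x))) {0..1}"
  proof (rule integration_by_parts[OF bounded_bilinear_mult])
    show "((\<lambda>x. p x * q' x) has_integral p 1 * q 1 - p 0 * q 0 - - integral {0..1} (\<lambda>x. p x * q' x)) {0..1}"
      using assms(5) integrable_integral[OF i1] by simp
  qed (use cp assms(1,2) in \<open>auto simp: has_real_derivative_iff_has_vector_derivative[symmetric]\<close>)
  then show ?thesis by (simp add: integral_unique)
qed

lemma integral_by_parts_periodic_x1:
  fixes a a1 b b1 :: "real \<times> real \<Rightarrow> real"
  assumes ca: "continuous_on UNIV a" "continuous_on UNIV a1"
    and cb: "continuous_on UNIV b" "continuous_on UNIV b1"
    and da: "\<And>x1 x2. ((\<lambda>s. a (s,x2)) has_real_derivative a1 (x1,x2)) (at x1)"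
    and db: "\<And>x1 x2. ((\<lambda>s. b (s,x2)) has_real_derivative b1 (x1,x2)) (at x1)"
    and pa: "\<And>x2. a (1,x2) = a (0,x2)" and pb: "\<And>x2. b (1,x2) = b (0,x2)"
  shows "integral (cbox (0,0) (1,1)) (\<lambda>x. a x * b1 x) = - integral (cbox (0,0) (1,1)) (\<lambda>x. a1 x * b x)"
proof -
  have "integral (cbox (0,0) (1,1)) (\<lambda>x. a x * b1 x)
      = integral {0..1} (\<lambda>y. integral {0..1} (\<lambda>x. a (x,y) * b1 (x,y)))"
    by (rule integral_cbox_iterated_swap) (intro continuous_intros ca cb)
  also have "\<dots> = integral {0..1} (\<lambda>y. - integral {0..1} (\<lambda>x. a1 (x,y) * b (x,y)))"
    by (intro integral_cong integral_by_parts_periodic da db continuous_on_slices ca cb) (simp add: pa pb)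
  also have "\<dots> = - integral (cbox (0,0) (1,1)) (\<lambda>x. a1 x * b x)"
    by (simp add: integral_neg integral_cbox_iterated_swap continuous_intros ca cb)
  finally show ?thesis .
qed

lemma integral_by_parts_periodic_x2:
  fixes a a2 b b2 :: "real \<times> real \<Rightarrow> real"
  assumes ca: "continuous_on UNIV a" "continuous_on UNIV a2"
    and cb: "continuous_on UNIV b" "continuous_on UNIV b2"
    and da: "\<And>x1 x2. ((\<lambda>s. a (x1,s)) has_real_derivative a2 (x1,x2)) (at x2)"
    and db: "\<And>x1 x2. ((\<lambda>s. b (x1,s)) has_real_derivative b2 (x1,x2)) (at x2)"
    and pa: "\<And>x1. a (x1,1) = a (x1,0)" and pb: "\<And>x1. b (x1,1) = b (x1,0)"
  shows "integral (cbox (0,0) (1,1)) (\<lambda>x. a x * b2 x) = - integral (cbox (0,0) (1,1)) (\<lambda>x. a2 x * b x)"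
proof -
  have "integral (cbox (0,0) (1,1)) (\<lambda>x. a x * b2 x)
      = integral {0..1} (\<lambda>y. integral {0..1} (\<lambda>x. a (y,x) * b2 (y,x)))"
    by (rule integral_cbox_iterated) (intro continuous_intros ca cb)
  also have "\<dots> = integral {0..1} (\<lambda>y. - integral {0..1} (\<lambda>x. a2 (y,x) * b (y,x)))"
    by (intro integral_cong integral_by_parts_periodic da db continuous_on_slices ca cb) (simp add: pa pb)
  also have "\<dots> = - integral (cbox (0,0) (1,1)) (\<lambda>x. a2 x * b x)"
    by (simp add: integral_neg integral_cbox_iterated continuous_intros ca cb)
  finally show ?thesis .
qed

text \<open>Transport by a divergence-free periodic field conserves the integral of w^2:
  the integrand is half the divergence of (u1 w^2, u2 w^2).\<close>

lemma integral_transport_eq_zero: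
  fixes w w1 w2 u1 u2 u11 u22 :: "real \<times> real \<Rightarrow> real"
  assumes c: "continuous_on UNIV w" "continuous_on UNIV w1" "continuous_on UNIV w2"
      "continuous_on UNIV u1" "continuous_on UNIV u2" "continuous_on UNIV u11" "continuous_on UNIV u22"
    and dw1: "\<And>x1 x2. ((\<lambda>s. w (s,x2)) has_real_derivative w1 (x1,x2)) (at x1)"
    and dw2: "\<And>x1 x2. ((\<lambda>s. w (x1,s)) has_real_derivative w2 (x1,x2)) (at x2)"
    and du1: "\<And>x1 x2. ((\<lambda>s. u1 (s,x2)) has_real_derivative u11 (x1,x2)) (at x1)"
    and du2: "\<And>x1 x2. ((\<lambda>s. u2 (x1,s)) has_real_derivative u22 (x1,x2)) (at x2)"
    and p1: "\<And>x2. w (1,x2) = w (0,x2)" "\<And>x2. u1 (1,x2) = u1 (0,x2)"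
    and p2: "\<And>x1. w (x1,1) = w (x1,0)" "\<And>x1. u2 (x1,1) = u2 (x1,0)"
    and div: "\<And>x. u11 x + u22 x = 0"
  shows "integral (cbox (0,0) (1,1)) (\<lambda>x. w x * (u1 x * w1 x + u2 x * w2 x)) = 0"
proof -
  let ?Q = "cbox (0::real,0::real) (1,1)"
  let ?F1 = "\<lambda>x. u11 x * (w x)\<^sup>2 + u1 x * (2 * w x * w1 x)"
  let ?F2 = "\<lambda>x. u22 x * (w x)\<^sup>2 + u2 x * (2 * w x * w2 x)"
  have "integral ?Q (\<lambda>x. (u1 x * (w x)\<^sup>2) * 0) = - integral ?Q (\<lambda>x. ?F1 x * 1)"
    by (rule integral_by_parts_periodic_x1)
      (auto intro!: continuous_intros c derivative_eq_intros du1 dw1 simp: p1)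
  moreover have "integral ?Q (\<lambda>x. (u2 x * (w x)\<^sup>2) * 0) = - integral ?Q (\<lambda>x. ?F2 x * 1)"
    by (rule integral_by_parts_periodic_x2)
      (auto intro!: continuous_intros c derivative_eq_intros du2 dw2 simp: p2)
  ultimately have "0 = integral ?Q (\<lambda>x. ?F1 x + ?F2 x)"
    by (simp add: integral_add integrable_continuous_UNIV continuous_intros c)
  also have "\<dots> = integral ?Q (\<lambda>x. 2 * (w x * (u1 x * w1 x + u2 x * w2 x)))"
  proof (rule integral_cong)
    fix x
    have "u11 x * (w x)\<^sup>2 + u22 x * (w x)\<^sup>2 = 0" using div[of x] by (metis distrib_right mult_zero_left)
    then show "?F1 x + ?F2 x = 2 * (w x * (u1 x * w1 x + u2 x * w2 x))"
      by (simp add: algebra_simps)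
  qed
  finally show ?thesis by simp
qed

lemma advection_diffusion_energy_identity:
  fixes w w1 w2 w11 w22 u1 u2 u11 u22 :: "real \<times> real \<Rightarrow> real"
  assumes c: "continuous_on UNIV w" "continuous_on UNIV w1" "continuous_on UNIV w2"
      "continuous_on UNIV w11" "continuous_on UNIV w22" "continuous_on UNIV u1" "continuous_on UNIV u2"
      "continuous_on UNIV u11" "continuous_on UNIV u22"
    and dw1: "\<And>x1 x2. ((\<lambda>s. w (s,x2)) has_real_derivative w1 (x1,x2)) (at x1)"
    and dw2: "\<And>x1 x2. ((\<lambda>s. w (x1,s)) has_real_derivative w2 (x1,x2)) (at x2)"
    and dw11: "\<And>x1 x2. ((\<lambda>s. w1 (s,x2)) has_real_derivative w11 (x1,x2)) (at x1)"
    and dw22: "\<And>x1 x2. ((\<lambda>s. w2 (x1,s)) has_real_derivative w22 (x1,x2)) (at x2)"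
    and du1: "\<And>x1 x2. ((\<lambda>s. u1 (s,x2)) has_real_derivative u11 (x1,x2)) (at x1)"
    and du2: "\<And>x1 x2. ((\<lambda>s. u2 (x1,s)) has_real_derivative u22 (x1,x2)) (at x2)"
    and p1: "\<And>x2. w (1,x2) = w (0,x2)" "\<And>x2. w1 (1,x2) = w1 (0,x2)" "\<And>x2. u1 (1,x2) = u1 (0,x2)"
    and p2: "\<And>x1. w (x1,1) = w (x1,0)" "\<And>x1. w2 (x1,1) = w2 (x1,0)" "\<And>x1. u2 (x1,1) = u2 (x1,0)"
    and div: "\<And>x. u11 x + u22 x = 0"
  shows "integral (cbox (0,0) (1,1)) (\<lambda>x. 2 * w x * (\<nu> * (w11 x + w22 x) - u1 x * w1 x - u2 x * w2 x))
     = - 2 * \<nu> * integral (cbox (0,0) (1,1)) (\<lambda>x. (w1 x)\<^sup>2 + (w2 x)\<^sup>2)"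
proof -
  let ?Q = "cbox (0::real,0::real) (1,1)"
  note int = integrable_continuous_UNIV[of _ "(0,0)" "(1,1)"]
  have A: "integral ?Q (\<lambda>x. w x * w11 x) = - integral ?Q (\<lambda>x. w1 x * w1 x)"
    by (rule integral_by_parts_periodic_x1[OF c(1,2,2,4) dw1 dw11 p1(1,2)])
  have B: "integral ?Q (\<lambda>x. w x * w22 x) = - integral ?Q (\<lambda>x. w2 x * w2 x)"
    by (rule integral_by_parts_periodic_x2[OF c(1,3,3,5) dw2 dw22 p2(1,2)])
  have C: "integral ?Q (\<lambda>x. w x * (u1 x * w1 x + u2 x * w2 x)) = 0"
    by (rule integral_transport_eq_zero[OF c(1,2,3,6-9) dw1 dw2 du1 du2 p1(1,3) p2(1,3) div])
  have "integral ?Q (\<lambda>x. 2 * w x * (\<nu> * (w11 x + w22 x) - u1 x * w1 x - u2 x * w2 x))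
     = integral ?Q (\<lambda>x. 2 * \<nu> * (w x * w11 x) + 2 * \<nu> * (w x * w22 x)
                          - 2 * (w x * (u1 x * w1 x + u2 x * w2 x)))"
    by (rule integral_cong) (simp add: algebra_simps)
  also have "\<dots> = 2 * \<nu> * integral ?Q (\<lambda>x. w x * w11 x) + 2 * \<nu> * integral ?Q (\<lambda>x. w x * w22 x)
                   - 2 * integral ?Q (\<lambda>x. w x * (u1 x * w1 x + u2 x * w2 x))"
    by (intro integral_unique has_integral_add has_integral_diff has_integral_mult_right
        integrable_integral int continuous_intros c)
  also have "\<dots> = - 2 * \<nu> * integral ?Q (\<lambda>x. (w1 x)\<^sup>2 + (w2 x)\<^sup>2)"
    using A B C by (simp add: algebra_simps integral_add int continuous_intros c power2_eq_square)
  finally show ?thesis .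
qed

lemma has_real_derivative_integral_square:
  fixes W Wt :: "(real \<times> real) \<times> real \<Rightarrow> real"
  assumes cW: "continuous_on {p. snd p > 0} W" and cWt: "continuous_on {p. snd p > 0} Wt"
    and dt: "\<And>x s. s > 0 \<Longrightarrow> ((\<lambda>\<tau>. W (x,\<tau>)) has_real_derivative Wt (x,s)) (at s)"
    and t: "t > 0"
  shows "((\<lambda>s. integral (cbox (0,0) (1,1)) (\<lambda>x. (W (x,s))\<^sup>2)) has_real_derivative
           integral (cbox (0,0) (1,1)) (\<lambda>x. 2 * W (x,t) * Wt (x,t))) (at t)"
proof -
  let ?U = "{t/2<..<2*t}"
  have tU: "t \<in> ?U" using t by auto
  have sub: "(\<lambda>(s,x). (x,s)) ` (?U \<times> cbox (0,0) (1,1)) \<subseteq> {p. snd p > 0}"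
    using t by auto
  have "((\<lambda>s. integral (cbox (0,0) (1,1)) (\<lambda>x. (W (x,s))\<^sup>2)) has_field_derivative
           integral (cbox (0,0) (1,1)) (\<lambda>x. 2 * W (x,t) * Wt (x,t))) (at t within ?U)"
  proof (rule leibniz_rule_field_derivative[where fx="\<lambda>s x. 2 * W (x,s) * Wt (x,s)"])
    fix s :: real and x :: "real \<times> real" assume "s \<in> ?U"
    then have s: "s > 0" using t by auto
    show "((\<lambda>s. (W (x,s))\<^sup>2) has_field_derivative 2 * W (x,s) * Wt (x,s)) (at s within ?U)"
      by (rule has_field_derivative_at_within) (auto intro!: derivative_eq_intros dt[OF s])
    show "(\<lambda>x. (W (x,s))\<^sup>2) integrable_on cbox (0,0) (1,1)"
      using s by (intro integrable_continuous_UNIV continuous_intros continuous_on_compose2[OF cW]) auto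
  next
    have "continuous_on (?U \<times> cbox (0,0) (1,1))
            (\<lambda>p. 2 * W ((\<lambda>(s,x). (x,s)) p) * Wt ((\<lambda>(s,x). (x,s)) p))"
      by (intro continuous_intros continuous_on_compose2[OF cW _ sub] continuous_on_compose2[OF cWt _ sub])
        (auto simp: case_prod_unfold intro!: continuous_intros)
    then show "continuous_on (?U \<times> cbox (0,0) (1,1)) (\<lambda>(s, x). 2 * W (x,s) * Wt (x,s))"
      by (simp add: case_prod_unfold)
  qed (use tU in auto)
  then show ?thesis using at_within_open[OF tU] by simp
qed

lemma unit_vectors_in_Basis:
  "((1,0),0) \<in> (Basis :: ((real \<times> real) \<times> real) set)"
  "((0,1),0) \<in> (Basis :: ((real \<times> real) \<times> real) set)"
  "((0,0),1) \<in> (Basis :: ((real \<times> real) \<times> real) set)"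
  by (auto simp: Basis_prod_def zero_prod_def)

lemma smooth_on_slices:
  fixes F :: "(real \<times> real) \<times> real \<Rightarrow> real"
  assumes sm: "smooth_on {p. snd p > 0} F" and vs: "set vs \<subseteq> Basis" and t: "t > 0"
  shows "continuous_on {p. snd p > 0} (dds vs F)"
    and "continuous_on UNIV (\<lambda>x. dds vs F (x,t))"
    and "((\<lambda>s. dds vs F ((s,x2),t)) has_real_derivative dds (((1,0),0) # vs) F ((x1,x2),t)) (at x1)"
    and "((\<lambda>s. dds vs F ((x1,s),t)) has_real_derivative dds (((0,1),0) # vs) F ((x1,x2),t)) (at x2)"
    and "((\<lambda>s. dds vs F (x,s)) has_real_derivative dds (((0,0),1) # vs) F (x,t)) (at t)"
proof -
  have C: "continuous_on {p. snd p > 0} (dds vs F)" and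
    D: "\<And>v p. v \<in> Basis \<Longrightarrow> snd p > 0 \<Longrightarrow> (\<lambda>s::real. dds vs F (p + s *\<^sub>R v)) differentiable (at 0)"
    using sm vs unfolding smooth_on_def by blast+
  show "continuous_on {p. snd p > 0} (dds vs F)" by (rule C)
  show "continuous_on UNIV (\<lambda>x. dds vs F (x,t))"
    using t by (intro continuous_on_compose2[OF C] continuous_intros) auto
  have G: "((\<lambda>s. dds vs F (p + s *\<^sub>R v)) has_real_derivative dds (v # vs) F p) (at 0)"
    if "v \<in> Basis" "snd p > 0" for v p
    using D[OF that] by (simp add: dd_def DERIV_deriv_iff_real_differentiable)
  have shift: "((\<lambda>s. g (s + c)) has_real_derivative D) (at 0) \<Longrightarrow> (g has_real_derivative D) (at c)"
    for g c D
    using DERIV_shift[of g D 0 c] by simp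
  show "((\<lambda>s. dds vs F ((s,x2),t)) has_real_derivative dds (((1,0),0) # vs) F ((x1,x2),t)) (at x1)"
    by (rule shift) (use G[of "((1,0),0)" "((x1,x2),t)"] unit_vectors_in_Basis t in \<open>simp add: add.commute\<close>)
  show "((\<lambda>s. dds vs F ((x1,s),t)) has_real_derivative dds (((0,1),0) # vs) F ((x1,x2),t)) (at x2)"
    by (rule shift) (use G[of "((0,1),0)" "((x1,x2),t)"] unit_vectors_in_Basis t in \<open>simp add: add.commute\<close>)
  show "((\<lambda>s. dds vs F (x,s)) has_real_derivative dds (((0,0),1) # vs) F (x,t)) (at t)"
    by (rule shift)
      (use G[of "((0,0),1)" "(x,t)"] unit_vectors_in_Basis t in \<open>simp add: add.commute zero_prod_def[symmetric]\<close>)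
qed

lemma dds_periodic:
  fixes F :: "(real \<times> real) \<times> real \<Rightarrow> real"
  assumes per: "\<And>x t. F (x + a, t) = F (x, t)"
  shows "dds vs F (x + a, t) = dds vs F (x, t)"
proof (induction vs arbitrary: x t)
  case (Cons v vs)
  have "dds vs F ((x + a, t) + s *\<^sub>R v) = dds vs F ((x, t) + s *\<^sub>R v)" for s
    using Cons[of "x + s *\<^sub>R fst v" "t + s * snd v"] by (cases v) (simp add: algebra_simps)
  then show ?case by (simp add: dd_def)
qed (simp add: per)

lemma NS_solD:
  assumes "NS_sol \<nu> u0 u om"
  shows "smooth_on {p. snd p > 0} om" "smooth_on {p. snd p > 0} (\<lambda>p. fst (u p))"
    "smooth_on {p. snd p > 0} (\<lambda>p. snd (u p))"
    "\<And>x t. om (x + (1,0), t) = om (x, t)" "\<And>x t. om (x + (0,1), t) = om (x, t)"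
    "\<And>x t. fst (u (x + (1,0), t)) = fst (u (x, t))" "\<And>x t. snd (u (x + (0,1), t)) = snd (u (x, t))"
    "\<And>p. snd p > 0 \<Longrightarrow> dd ((1,0),0) (\<lambda>p. fst (u p)) p + dd ((0,1),0) (\<lambda>p. snd (u p)) p = 0"
    "\<And>p. snd p > 0 \<Longrightarrow> dd ((0,0),1) om p + fst (u p) * dd ((1,0),0) om p + snd (u p) * dd ((0,1),0) om p
                   = \<nu> * (dd ((1,0),0) (dd ((1,0),0) om) p + dd ((0,1),0) (dd ((0,1),0) om) p)"
  using assms unfolding NS_sol_def Let_def periodic2_def by auto

definition enstrophy :: "((real \<times> real) \<times> real \<Rightarrow> real) \<Rightarrow> real \<Rightarrow> real" where
  "enstrophy om t = integral (cbox (0,0) (1,1)) (\<lambda>x. (om (x,t))\<^sup>2)"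

definition palinstrophy :: "((real \<times> real) \<times> real \<Rightarrow> real) \<Rightarrow> real \<Rightarrow> real" where
  "palinstrophy om t =
     integral (cbox (0,0) (1,1)) (\<lambda>x. (dd ((1,0),0) om (x,t))\<^sup>2 + (dd ((0,1),0) om (x,t))\<^sup>2)"

lemma
  fixes om :: "(real \<times> real) \<times> real \<Rightarrow> real"
  assumes sm: "smooth_on {p. snd p > 0} om" and t: "t > 0"
  shows palinstrophy_nonneg: "palinstrophy om t \<ge> 0"
    and L2sq_eq_enstrophy: "L2sq om t = ennreal (enstrophy om t)"
proof -
  note S0 = smooth_on_slices[OF sm, of "[]", simplified, OF t]
  note S1 = smooth_on_slices[OF sm, of "[((1,0),0)]", simplified, OF unit_vectors_in_Basis(1) t]
  note S2 = smooth_on_slices[OF sm, of "[((0,1),0)]", simplified, OF unit_vectors_in_Basis(2) t]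
  show "palinstrophy om t \<ge> 0" unfolding palinstrophy_def
    by (rule integral_nonneg) (auto intro!: integrable_continuous_UNIV continuous_intros S1 S2)
  show "L2sq om t = ennreal (enstrophy om t)"
    unfolding L2sq_def cellQ_def enstrophy_def
    by (rule nn_integral_has_integral_lebesgue')
      (auto intro!: integrable_integral integrable_continuous_UNIV continuous_intros S0)
qed

lemma NS_enstrophy_deriv:
  assumes sol: "NS_sol \<nu> u0 u om" and t: "t > 0"
  shows "(enstrophy om has_real_derivative - 2 * \<nu> * palinstrophy om t) (at t)"
proof -
  note N = NS_solD[OF sol]
  define e1 :: "(real \<times> real) \<times> real" where "e1 = ((1,0),0)"
  define e2 :: "(real \<times> real) \<times> real" where "e2 = ((0,1),0)"
  define U1 where "U1 = (\<lambda>p. fst (u p))"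
  define U2 where "U2 = (\<lambda>p. snd (u p))"
  note B = unit_vectors_in_Basis[folded e1_def e2_def]
  note S0 = smooth_on_slices[OF N(1), of "[]", simplified]
  note S1 = smooth_on_slices[OF N(1), of "[e1]", simplified, OF B(1)]
  note S2 = smooth_on_slices[OF N(1), of "[e2]", simplified, OF B(2)]
  note S11 = smooth_on_slices[OF N(1), of "[e1,e1]", simplified, OF B(1)]
  note S22 = smooth_on_slices[OF N(1), of "[e2,e2]", simplified, OF B(2)]
  note St = smooth_on_slices[OF N(1), of "[((0,0),1)]", simplified, OF B(3)]
  note U1s = smooth_on_slices[OF N(2)[folded U1_def], of "[]", simplified]
  note U2s = smooth_on_slices[OF N(3)[folded U2_def], of "[]", simplified]
  note U1s1 = smooth_on_slices[OF N(2)[folded U1_def], of "[e1]", simplified, OF B(1)]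
  note U2s2 = smooth_on_slices[OF N(3)[folded U2_def], of "[e2]", simplified, OF B(2)]
  have P1: "om ((1,x2),t) = om ((0,x2),t)" "dd e1 om ((1,x2),t) = dd e1 om ((0,x2),t)"
    "U1 ((1,x2),t) = U1 ((0,x2),t)" for x2
    using N(4)[of "(0,x2)" t] dds_periodic[of om "(1,0)" "[e1]" "(0,x2)" t] N(4) N(6)[of "(0,x2)" t]
    unfolding U1_def by auto
  have P2: "om ((x1,1),t) = om ((x1,0),t)" "dd e2 om ((x1,1),t) = dd e2 om ((x1,0),t)"
    "U2 ((x1,1),t) = U2 ((x1,0),t)" for x1
    using N(5)[of "(x1,0)" t] dds_periodic[of om "(0,1)" "[e2]" "(x1,0)" t] N(5) N(7)[of "(x1,0)" t]
    unfolding U2_def by auto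
  have pde: "dd ((0,0),1) om (x,t) = \<nu> * (dd e1 (dd e1 om) (x,t) + dd e2 (dd e2 om) (x,t))
                 - U1 (x,t) * dd e1 om (x,t) - U2 (x,t) * dd e2 om (x,t)" for x
    using N(9)[of "(x,t)"] t unfolding e1_def e2_def U1_def U2_def by (simp add: algebra_simps)
  have div: "dd e1 U1 (x,t) + dd e2 U2 (x,t) = 0" for x
    using N(8)[of "(x,t)"] t unfolding e1_def e2_def U1_def U2_def by simp
  have "(enstrophy om has_real_derivative
           integral (cbox (0,0) (1,1)) (\<lambda>x. 2 * om (x,t) * dd ((0,0),1) om (x,t))) (at t)"
    unfolding enstrophy_def
    by (rule has_real_derivative_integral_square[OF S0(1)[OF t] St(1)[OF t] _ t]) (use S0(5) in simp)
  also have "integral (cbox (0,0) (1,1)) (\<lambda>x. 2 * om (x,t) * dd ((0,0),1) om (x,t))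
             = - 2 * \<nu> * palinstrophy om t"
    unfolding pde palinstrophy_def e1_def[symmetric] e2_def[symmetric]
    by (rule advection_diffusion_energy_identity)
      (use S0 S1 S2 S11 S22 U1s U2s U1s1 U2s2 t div P1 P2 in \<open>simp_all add: e1_def e2_def\<close>)
  finally show ?thesis .
qed

section \<open>Interpolating the enstrophy between ball masses and the palinstrophy\<close>

lemma tdist_le_dist: "tdist x y \<le> dist x y"
proof -
  have "tdist x y \<le> dist x (y + (real_of_int 0, real_of_int 0))"
    unfolding tdist_def by (rule cInf_lower) (blast, auto intro!: bdd_belowI[of _ 0])
  then show ?thesis by (simp add: zero_prod_def[symmetric])
qed

lemma grid_cell_subset_tball:
  assumes "i < n" "j < n" "1 / real n \<le> \<rho>"
  shows "grid_cell n i j \<subseteq> tball ((real i + 1/2) / n, (real j + 1/2) / n) \<rho>"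
proof
  fix y assume y: "y \<in> grid_cell n i j"
  obtain y1 y2 where yy: "y = (y1,y2)" by (cases y)
  have n: "n > 0" using assms by simp
  have b: "real i / n \<le> y1" "y1 \<le> real (Suc i) / n" "real j / n \<le> y2" "y2 \<le> real (Suc j) / n"
    using y unfolding grid_cell_def yy by auto
  have "real (Suc i) / n \<le> 1" "real (Suc j) / n \<le> 1" using assms n by (auto simp: field_simps)
  moreover have "0 \<le> y1" "0 \<le> y2"
    using b(1,3) divide_nonneg_nonneg[of "real i" "real n"] divide_nonneg_nonneg[of "real j" "real n"]
    by linarith+
  ultimately have inQ: "y \<in> cellQ" unfolding cellQ_def yy using b by auto
  have d1: "\<bar>(real i + 1/2) / n - y1\<bar> \<le> 1 / (2 * n)" using b n by (auto simp: field_simps abs_le_iff)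
  have d2: "\<bar>(real j + 1/2) / n - y2\<bar> \<le> 1 / (2 * n)" using b n by (auto simp: field_simps abs_le_iff)
  have "dist ((real i + 1/2) / n, (real j + 1/2) / n) y
      = sqrt (((real i + 1/2) / n - y1)\<^sup>2 + ((real j + 1/2) / n - y2)\<^sup>2)"
    unfolding yy by (simp add: dist_Pair_Pair dist_real_def)
  also have "\<dots> \<le> sqrt ((1 / (2 * n))\<^sup>2 + (1 / (2 * n))\<^sup>2)"
    using d1 d2 by (intro real_sqrt_le_mono add_mono) (auto simp: abs_le_square_iff[symmetric])
  also have "\<dots> < sqrt ((1 / n)\<^sup>2)"
    using n by (intro real_sqrt_less_mono) (simp add: power2_eq_square field_simps)
  also have "\<dots> \<le> \<rho>" using assms(3) by simp
  finally show "y \<in> tball ((real i + 1/2) / n, (real j + 1/2) / n) \<rho>"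
    unfolding tball_def using inQ le_less_trans[OF tdist_le_dist] by blast
qed

lemma integral_grid_cell_le_ball_mass:
  fixes om :: "(real \<times> real) \<times> real \<Rightarrow> real"
  assumes c: "continuous_on UNIV (\<lambda>y. om (y,t))" and ij: "i < n" "j < n" and n: "1 / real n \<le> \<rho>"
    and M: "\<And>x. ball_mass om t x \<rho> \<le> ennreal M" and "M \<ge> 0"
  shows "integral (grid_cell n i j) (\<lambda>y. \<bar>om (y,t)\<bar>) \<le> M"
proof -
  let ?c = "((real i + 1/2) / n, (real j + 1/2) / n)"
  have "ennreal (integral (grid_cell n i j) (\<lambda>y. \<bar>om (y,t)\<bar>))
      = (\<integral>\<^sup>+ y\<in>grid_cell n i j. ennreal \<bar>om (y,t)\<bar> \<partial>lborel)"
    unfolding grid_cell_def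
    by (rule nn_integral_has_integral_lebesgue'[symmetric])
      (auto intro!: integrable_integral integrable_continuous_UNIV continuous_intros c)
  also have "\<dots> \<le> (\<integral>\<^sup>+ y\<in>tball ?c \<rho>. ennreal \<bar>om (y,t)\<bar> \<partial>lborel)"
    using grid_cell_subset_tball[OF ij n] by (intro nn_integral_mono) (auto split: split_indicator)
  also have "\<dots> \<le> ennreal M" using M[of ?c] unfolding ball_mass_def .
  finally show ?thesis using \<open>M \<ge> 0\<close> by (auto simp: ennreal_le_iff2)
qed

lemma integral_abs_le_ball_mass:
  fixes om :: "(real \<times> real) \<times> real \<Rightarrow> real"
  assumes c: "continuous_on UNIV (\<lambda>y. om (y,t))" and n: "n > 0"
    and M: "\<And>x. ball_mass om t x (1 / real n) \<le> ennreal M" and "M \<ge> 0"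
  shows "integral (cbox (0,0) (1,1)) (\<lambda>y. \<bar>om (y,t)\<bar>) \<le> (real n)\<^sup>2 * M"
proof -
  have "integral (cbox (0,0) (1,1)) (\<lambda>y. \<bar>om (y,t)\<bar>)
      = (\<Sum>i<n. \<Sum>j<n. integral (grid_cell n i j) (\<lambda>y. \<bar>om (y,t)\<bar>))"
    by (intro integral_unit_square_grid n continuous_intros c)
  also have "\<dots> \<le> (\<Sum>i<n. \<Sum>j<n. M)"
    by (intro sum_mono integral_grid_cell_le_ball_mass[OF c _ _ order.refl M \<open>M \<ge> 0\<close>]) auto
  finally show ?thesis by (simp add: power2_eq_square)
qed

text \<open>Use the ball mass at radius 1/3 to bound the L1 norm and the ball mass at radius r on
  the grid of mesh 1 / ceiling (1 / r).\<close>

lemma enstrophy_le_mass_palinstrophy: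
  fixes om :: "(real \<times> real) \<times> real \<Rightarrow> real"
  assumes sm: "smooth_on {p. snd p > 0} om" and t: "t > 0" and r: "0 < r" "r \<le> 1"
    and M: "\<And>x. ball_mass om t x r \<le> ennreal M" "M \<ge> 0"
    and M3: "\<And>x. ball_mass om t x (1/3) \<le> ennreal M3" "M3 \<ge> 0"
  shows "enstrophy om t \<le> 36 * M * M3 / r\<^sup>2 + 2 * r\<^sup>2 * palinstrophy om t"
proof -
  note S0 = smooth_on_slices[OF sm, of "[]", simplified, OF t]
  note S1 = smooth_on_slices[OF sm, of "[((1,0),0)]", simplified, OF unit_vectors_in_Basis(1) t]
  note S2 = smooth_on_slices[OF sm, of "[((0,1),0)]", simplified, OF unit_vectors_in_Basis(2) t]
  define L where "L = integral (cbox (0,0) (1,1)) (\<lambda>x. \<bar>om (x,t)\<bar>)"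
  have L0: "0 \<le> L" unfolding L_def
    by (rule integral_nonneg) (auto intro!: integrable_continuous_UNIV continuous_intros S0)
  have L: "L \<le> 9 * M3"
    using integral_abs_le_ball_mass[OF S0(2), of 3 M3] M3 unfolding L_def by simp
  define n where "n = nat \<lceil>1 / r\<rceil>"
  have nr: "1 / r \<le> real n" "real n < 1 / r + 1" unfolding n_def using r by (auto, linarith)
  have n0: "n > 0" using nr r by (smt (verit) divide_pos_pos of_nat_0 of_nat_0_less_iff)
  have invn: "1 / real n \<le> r" using nr r n0 by (auto simp: field_simps)
  have P: "palinstrophy om t = integral (cbox (0,0) (1,1)) (\<lambda>x. (dd ((1,0),0) om (x,t))\<^sup>2)
                               + integral (cbox (0,0) (1,1)) (\<lambda>x. (dd ((0,1),0) om (x,t))\<^sup>2)"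
    unfolding palinstrophy_def
    by (intro integral_add integrable_continuous_UNIV continuous_intros S1(2) S2(2))
  have "enstrophy om t \<le> (real n)\<^sup>2 * M * L + 2 / (real n)\<^sup>2 * palinstrophy om t"
    unfolding enstrophy_def P L_def
    by (rule unit_square_integral_le_grid[OF S0(2) S1(2) S2(2) S0(3) S0(4) n0])
      (rule integral_grid_cell_le_ball_mass[OF S0(2) _ _ invn M])
  also have "\<dots> \<le> 4 / r\<^sup>2 * M * (9 * M3) + 2 * r\<^sup>2 * palinstrophy om t"
  proof (intro add_mono mult_mono mult_right_mono)
    have "real n \<le> 2 / r" using nr r by (simp add: field_simps)
    then have "(real n)\<^sup>2 \<le> (2 / r)\<^sup>2" by (intro power_mono) auto
    then show "(real n)\<^sup>2 \<le> 4 / r\<^sup>2" by (simp add: power_divide)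
    have "(1 / real n)\<^sup>2 \<le> r\<^sup>2" using invn by (intro power_mono) auto
    then show "2 / (real n)\<^sup>2 \<le> 2 * r\<^sup>2" by (simp add: power_divide)
  qed (use L L0 M palinstrophy_nonneg[OF sm t] in auto)
  finally show ?thesis by (simp add: field_simps)
qed

section \<open>From the interpolation inequality to decay\<close>

text \<open>Mean value theorem on [t/2, t], where Y stays above Y1 because it is nonincreasing.\<close>

lemma decay_comparison:
  fixes Y D \<Phi> \<Phi>' :: "real \<Rightarrow> real"
  assumes dY: "\<And>s. s > 0 \<Longrightarrow> (Y has_real_derivative - 2 * \<nu> * D s) (at s)"
    and D: "\<And>s. s > 0 \<Longrightarrow> D s \<ge> 0" and \<nu>: "\<nu> \<ge> 0"
    and d\<Phi>: "\<And>y. y > Y1 \<Longrightarrow> (\<Phi> has_real_derivative \<Phi>' y) (at y)"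
    and \<Phi>: "\<And>y. y > Y1 \<Longrightarrow> \<Phi> y \<ge> 0"
    and rate: "\<And>s. s > 0 \<Longrightarrow> Y s > Y1 \<Longrightarrow> \<Phi>' (Y s) * (- 2 * \<nu> * D s) \<ge> c"
    and t: "t > 0" and big: "Y t > Y1"
  shows "\<Phi> (Y t) \<ge> c * t / 2"
proof -
  have above: "Y s > Y1" if "s \<in> {t/2..t}" for s
  proof -
    have "Y t \<le> Y s"
      using that t by (intro DERIV_nonpos_imp_nonincreasing[of s t Y])
        (auto intro!: exI dY simp: mult_nonneg_nonneg D \<nu>)
    then show ?thesis using big by simp
  qed
  have "((\<lambda>s. \<Phi> (Y s)) has_real_derivative \<Phi>' (Y s) * (- 2 * \<nu> * D s)) (at s)"
    if "s \<in> {t/2..t}" for s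
    using DERIV_chain2[OF d\<Phi>[OF above[OF that]] dY] that t by simp
  then have "\<exists>z. t/2 < z \<and> z < t \<and> \<Phi> (Y t) - \<Phi> (Y (t/2)) = (t - t/2) * (\<Phi>' (Y z) * (- 2 * \<nu> * D z))"
    using t by (intro MVT2) auto
  then obtain z where z: "t/2 < z" "z < t"
    and eq: "\<Phi> (Y t) = \<Phi> (Y (t/2)) + t/2 * (\<Phi>' (Y z) * (- 2 * \<nu> * D z))"
    by (auto simp: algebra_simps)
  have "c \<le> \<Phi>' (Y z) * (- 2 * \<nu> * D z)" using rate[of z] above[of z] z t by simp
  then have "t/2 * c \<le> t/2 * (\<Phi>' (Y z) * (- 2 * \<nu> * D z))" using t by (intro mult_left_mono) auto
  moreover have "\<Phi> (Y (t/2)) \<ge> 0" using \<Phi> above[of "t/2"] t by simp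
  ultimately show ?thesis using eq by (simp add: field_simps)
qed

lemma dissipation_lower_bound_powr:
  fixes y d :: real
  assumes \<alpha>: "0 < \<alpha>" "\<alpha> < 2" and K: "K > 0" and big: "y > 8 * K"
    and key: "\<And>r. 0 < r \<Longrightarrow> r < 1/2 \<Longrightarrow> y \<le> K * r powr (\<alpha> - 2) + 2 * r\<^sup>2 * d"
  shows "d \<ge> y / 4 * (y / (2 * K)) powr (2 / (2 - \<alpha>))"
proof -
  define \<beta> where "\<beta> = 2 / (2 - \<alpha>)"
  have y: "y > 0" using big K by auto
  define r where "r = (2 * K / y) powr (1 / (2 - \<alpha>))"
  have r0: "r > 0" unfolding r_def using K y by auto
  have rp: "r powr (2 - \<alpha>) = 2 * K / y"
    unfolding r_def using \<alpha> K y by (simp add: powr_powr)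
  have "2 * K / y < 1/4" using big K by (simp add: field_simps)
  also have "(1/4::real) \<le> (1/2) powr (2 - \<alpha>)"
  proof -
    have "(1/2::real) powr 2 \<le> (1/2) powr (2 - \<alpha>)" using \<alpha> by (intro powr_mono') auto
    then show ?thesis by (simp add: powr_realpow[of "1/2" 2, simplified] power2_eq_square)
  qed
  finally have "r powr (2 - \<alpha>) < (1/2) powr (2 - \<alpha>)" using rp by simp
  then have rh: "r < 1/2"
    using \<alpha> r0 by (meson powr_less_cancel2 less_eq_real_def zero_less_divide_iff zero_less_numeral
        zero_less_one diff_gt_0_iff_gt)
  have "K * r powr (\<alpha> - 2) = K / r powr (2 - \<alpha>)"
    using powr_minus_divide[of r "2 - \<alpha>"] by simp
  also have "\<dots> = y / 2" using rp K y by simp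
  finally have "y / 4 / r\<^sup>2 \<le> d" using key[OF r0 rh] r0 by (simp add: field_simps)
  moreover have "r\<^sup>2 = (2 * K / y) powr \<beta>"
    using r0 unfolding r_def \<beta>_def by (simp add: powr_powr powr_realpow[symmetric])
  moreover have "(2 * K / y) powr \<beta> = 1 / (y / (2 * K)) powr \<beta>"
    using K y by (simp add: powr_divide)
  ultimately show ?thesis unfolding \<beta>_def by (simp add: field_simps)
qed

lemma powr_growth_rate:
  fixes y d :: real
  assumes y: "y > 0" and K: "K > 0" and \<beta>: "\<beta> > 0" and \<nu>: "\<nu> \<ge> 0"
    and d: "d \<ge> y / 4 * (y / (2 * K)) powr \<beta>"
  shows "- \<beta> * y powr (- \<beta> - 1) * (- 2 * \<nu> * d) \<ge> \<beta> / 2 * (2 * K) powr (- \<beta>) * \<nu>"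
proof -
  have "y powr (- \<beta> - 1) * y * y powr \<beta> = 1"
    using y by (simp add: powr_add[symmetric] powr_diff powr_minus_divide field_simps)
  moreover have "(y / (2 * K)) powr \<beta> = y powr \<beta> * (2 * K) powr (- \<beta>)"
    using y K by (simp add: powr_divide powr_minus_divide)
  ultimately have "\<beta> / 2 * (2 * K) powr (- \<beta>) * \<nu>
      = 2 * \<beta> * \<nu> * y powr (- \<beta> - 1) * (y / 4 * (y / (2 * K)) powr \<beta>)"
    by (simp add: field_simps)
  also have "\<dots> \<le> 2 * \<beta> * \<nu> * y powr (- \<beta> - 1) * d"
    using d \<beta> \<nu> by (intro mult_left_mono) auto
  also have "\<dots> = - \<beta> * y powr (- \<beta> - 1) * (- 2 * \<nu> * d)" by simp
  finally show ?thesis .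
qed

definition powr_decay_const :: "real \<Rightarrow> real \<Rightarrow> real" where
  "powr_decay_const K \<alpha> =
     max (8 * K) ((2 / (2 - \<alpha>) / 4 * (2 * K) powr (- (2 / (2 - \<alpha>)))) powr (- ((2 - \<alpha>) / 2)))"

lemma powr_decay_const_pos: "K > 0 \<Longrightarrow> powr_decay_const K \<alpha> > 0"
  unfolding powr_decay_const_def by (simp add: less_max_iff_disj)

text \<open>Choosing r with K r powr (alpha - 2) = Y / 2 turns the interpolation inequality into
  D \<ge> c Y powr (1 + beta), beta = 2 / (2 - alpha); then Y powr (- beta) grows linearly.\<close>

lemma decay_powr:
  fixes Y D :: "real \<Rightarrow> real"
  assumes \<nu>: "\<nu> > 0" and \<alpha>: "0 < \<alpha>" "\<alpha> < 2" and K: "K > 0"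
    and dY: "\<And>s. s > 0 \<Longrightarrow> (Y has_real_derivative - 2 * \<nu> * D s) (at s)"
    and D: "\<And>s. s > 0 \<Longrightarrow> D s \<ge> 0"
    and key: "\<And>s r. s > 0 \<Longrightarrow> 0 < r \<Longrightarrow> r < 1/2 \<Longrightarrow> Y s \<le> K * r powr (\<alpha> - 2) + 2 * r\<^sup>2 * D s"
    and t: "t > 0" "\<nu> * t < 1"
  shows "Y t \<le> powr_decay_const K \<alpha> / (\<nu> * t) powr ((2 - \<alpha>) / 2)"
proof -
  define \<beta> where "\<beta> = 2 / (2 - \<alpha>)"
  have \<beta>: "\<beta> > 0" unfolding \<beta>_def using \<alpha> by auto
  define \<kappa> where "\<kappa> = \<beta> / 2 * (2 * K) powr (- \<beta>)"
  have \<kappa>: "\<kappa> > 0" unfolding \<kappa>_def using \<beta> K by auto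
  have C: "powr_decay_const K \<alpha> = max (8 * K) ((\<kappa> / 2) powr (- ((2 - \<alpha>) / 2)))"
    unfolding powr_decay_const_def \<kappa>_def \<beta>_def by (simp add: field_simps)
  have pw: "(\<nu> * t) powr ((2 - \<alpha>) / 2) > 0" "(\<nu> * t) powr ((2 - \<alpha>) / 2) \<le> 1"
    using \<nu> t \<alpha> by (auto intro!: powr_le1)
  show ?thesis
  proof (cases "Y t > 8 * K")
    case False
    then have "Y t \<le> powr_decay_const K \<alpha>" unfolding C by simp
    also have "\<dots> \<le> powr_decay_const K \<alpha> / (\<nu> * t) powr ((2 - \<alpha>) / 2)"
      using pw powr_decay_const_pos[OF K] by (simp add: field_simps)
    finally show ?thesis .
  next
    case True
    have rate: "- \<beta> * Y s powr (- \<beta> - 1) * (- 2 * \<nu> * D s) \<ge> \<kappa> * \<nu>" if "s > 0" "Y s > 8 * K" for s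
      unfolding \<kappa>_def using that K \<beta> \<nu>
      by (intro powr_growth_rate dissipation_lower_bound_powr[OF \<alpha> K that(2) key[OF that(1)], folded \<beta>_def])
        auto
    have d\<Phi>: "((\<lambda>y. y powr (- \<beta>)) has_real_derivative - \<beta> * y powr (- \<beta> - 1)) (at y)"
      if "y > 8 * K" for y
      using DERIV_fun_powr[OF DERIV_ident, of y "- \<beta>"] that K by simp
    have "\<kappa> * \<nu> * t / 2 \<le> Y t powr (- \<beta>)"
      using \<nu> by (intro decay_comparison[OF dY D _ d\<Phi> _ rate t(1) True]) auto
    have yt: "Y t > 0" using True K by simp
    have "Y t = (Y t powr (- \<beta>)) powr (- ((2 - \<alpha>) / 2))"
      using yt \<alpha> unfolding powr_powr \<beta>_def by (simp add: field_simps)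
    also have "\<dots> \<le> (\<kappa> / 2 * (\<nu> * t)) powr (- ((2 - \<alpha>) / 2))"
      using \<open>\<kappa> * \<nu> * t / 2 \<le> Y t powr (- \<beta>)\<close> \<kappa> \<nu> t \<alpha> by (intro powr_mono2') (auto simp: field_simps)
    also have "\<dots> = (\<kappa> / 2) powr (- ((2 - \<alpha>) / 2)) / (\<nu> * t) powr ((2 - \<alpha>) / 2)"
      using \<kappa> \<nu> t by (simp add: powr_mult[of "\<kappa>/2" "\<nu> * t", symmetric] powr_minus_divide)
    also have "\<dots> \<le> powr_decay_const K \<alpha> / (\<nu> * t) powr ((2 - \<alpha>) / 2)"
      unfolding C using pw by (intro divide_right_mono) auto
    finally show ?thesis .
  qed
qed

lemma log_radius_choice:
  fixes y K :: real
  assumes K: "K > 0" and ye: "y > exp 1" and yK: "y > 16 * K\<^sup>2 + 16 * K + 1"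
  defines "r \<equiv> sqrt (4 * K / (y * sqrt (ln y)))"
  shows "0 < r" "r < 1/2" "K / (r\<^sup>2 * sqrt (- ln r)) \<le> y / 2"
proof -
  define L where "L = ln y"
  define \<rho> where "\<rho> = 4 * K / (y * sqrt L)"
  have y0: "y > 0" using ye by (meson exp_gt_zero less_trans)
  have L1: "L > 1" unfolding L_def using ye y0 by (metis ln_exp ln_less_cancel_iff exp_gt_zero)
  have yL: "y * sqrt L \<ge> y" using L1 y0 by simp
  have \<rho>0: "\<rho> > 0" unfolding \<rho>_def using K y0 L1 by simp
  have r: "r = sqrt \<rho>" unfolding r_def \<rho>_def L_def ..
  have r2: "r\<^sup>2 = \<rho>" unfolding r using \<rho>0 by simp
  show r0: "0 < r" unfolding r using \<rho>0 by simp
  have "16 * K < y * sqrt L" using yL yK K by (smt (verit) zero_le_power2)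
  then have "\<rho> < 1/4" unfolding \<rho>_def using K y0 L1 by (simp add: field_simps)
  then show rh: "r < 1/2" unfolding r using \<rho>0
    by (metis real_sqrt_less_iff real_sqrt_divide real_sqrt_one real_sqrt_four)
  have lnr: "- ln r = ln (y * sqrt L / (4 * K)) / 2"
  proof -
    have "ln \<rho> = 2 * ln r" using r2 r0 by (metis ln_realpow of_nat_numeral)
    moreover have "ln \<rho> = - ln (y * sqrt L / (4 * K))"
      unfolding \<rho>_def using K y0 L1 by (simp add: ln_div)
    ultimately show ?thesis by simp
  qed
  have "y * L \<ge> 16 * K\<^sup>2" using yK L1 y0 K
    by (smt (verit) mult_left_mono mult_cancel_left1 zero_le_power2)
  then have "y * (16 * K\<^sup>2) \<le> y * (y * L)" using y0 by (intro mult_left_mono) auto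
  then have "y \<le> (y * sqrt L / (4 * K))\<^sup>2"
    using y0 K L1 by (simp add: power_mult_distrib power_divide field_simps power2_eq_square)
  then have "ln y \<le> ln ((y * sqrt L / (4 * K))\<^sup>2)" using y0 by (metis ln_le_cancel_iff less_le_trans)
  also have "\<dots> = 2 * ln (y * sqrt L / (4 * K))"
    using y0 K L1 by (simp add: ln_realpow)
  finally have "L \<le> 4 * (- ln r)" unfolding L_def[symmetric] lnr by simp
  then have "sqrt L \<le> sqrt 4 * sqrt (- ln r)" by (metis real_sqrt_le_iff real_sqrt_mult)
  then have sq: "sqrt L \<le> 2 * sqrt (- ln r)" by simp
  have lr0: "- ln r > 0" using rh r0 by simp
  have "K / (r\<^sup>2 * sqrt (- ln r)) = y * sqrt L / (4 * sqrt (- ln r))"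
    unfolding r2 \<rho>_def using K y0 L1 lr0 by (simp add: field_simps)
  also have "\<dots> \<le> y * (2 * sqrt (- ln r)) / (4 * sqrt (- ln r))"
    using sq y0 lr0 by (intro divide_right_mono mult_left_mono) auto
  also have "\<dots> = y / 2" using lr0 by simp
  finally show "K / (r\<^sup>2 * sqrt (- ln r)) \<le> y / 2" .
qed

lemma dissipation_lower_bound_log:
  fixes y d :: real
  assumes K: "K > 0" and ye: "y > exp 1" and yK: "y > 16 * K\<^sup>2 + 16 * K + 1"
    and key: "\<And>r. 0 < r \<Longrightarrow> r < 1/2 \<Longrightarrow> y \<le> K / (r\<^sup>2 * sqrt (- ln r)) + 2 * r\<^sup>2 * d"
  shows "d \<ge> y\<^sup>2 * sqrt (ln y) / (16 * K)"
proof -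
  define r where "r = sqrt (4 * K / (y * sqrt (ln y)))"
  note r = log_radius_choice[OF K ye yK, folded r_def]
  have y0: "y > 0" and L: "ln y > 0" using ye by (smt (verit) exp_gt_one ln_gt_zero)+
  have "y \<le> y / 2 + 2 * r\<^sup>2 * d" using key[OF r(1,2)] r(3) by linarith
  then have "y / (4 * r\<^sup>2) \<le> d" using r(1) by (simp add: field_simps)
  moreover have "y / (4 * r\<^sup>2) = y\<^sup>2 * sqrt (ln y) / (16 * K)"
    unfolding r_def using K y0 L by (simp add: field_simps power2_eq_square)
  ultimately show ?thesis by simp
qed

lemma mult_sqrt_neg_ln_bounds:
  fixes s :: real
  assumes "0 < s" "s < 1"
  shows "0 < s * sqrt (- ln s)" "s * sqrt (- ln s) \<le> sqrt s"
proof -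
  show "0 < s * sqrt (- ln s)" using assms by simp
  have "- ln s = ln (1/s)" using assms by (simp add: ln_div)
  also have "\<dots> \<le> 1/s" using assms ln_le_minus_one[of "1/s"] by simp
  finally have "s * sqrt (- ln s) \<le> s * sqrt (1/s)" using assms by (intro mult_left_mono) auto
  also have "s * sqrt (1/s) = sqrt s" using assms by (simp add: real_sqrt_divide real_div_sqrt)
  finally show "s * sqrt (- ln s) \<le> sqrt s" .
qed

lemma le_of_mult_sqrt_ln_le:
  fixes y s A :: real
  assumes s: "0 < s" "s < 1" and A: "A > 0" and y: "y \<ge> exp 1" and ya: "y * sqrt (ln y) \<le> A / s"
  shows "y \<le> (2 * A + 1) / (s * sqrt (- ln s))"
proof (rule ccontr)
  assume "\<not> ?thesis"
  then have big: "y > (2 * A + 1) / (s * sqrt (- ln s))" by simp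
  note ss = mult_sqrt_neg_ln_bounds[OF s]
  have l0: "- ln s > 0" using s by simp
  have "(2 * A + 1) / (s * sqrt (- ln s)) \<ge> (2 * A + 1) / sqrt s"
    using ss A s by (intro divide_left_mono mult_pos_pos) auto
  also have "(2 * A + 1) / sqrt s \<ge> 1 / sqrt s" using A s by (intro divide_right_mono) auto
  finally have y1: "y > 1 / sqrt s" using big by simp
  have p1: "0 < 1 / sqrt s" using s by simp
  then have y0: "0 < y" using y1 by linarith
  have "ln y > ln (1 / sqrt s)" using ln_less_cancel_iff[OF p1 y0] y1 by simp
  also have "ln (1 / sqrt s) = - ln s / 2" using s by (simp add: ln_div ln_sqrt)
  finally have "sqrt (ln y) > sqrt (- ln s / 2)" by simp
  also have "sqrt (- ln s / 2) = sqrt (- ln s) / sqrt 2" by (rule real_sqrt_divide)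
  finally have sy: "sqrt (ln y) > sqrt (- ln s) / sqrt 2" .
  have "y * sqrt (ln y) > (2 * A + 1) / (s * sqrt (- ln s)) * (sqrt (- ln s) / sqrt 2)"
    using big sy ss l0 A y0 by (intro mult_strict_mono) auto
  also have "(2 * A + 1) / (s * sqrt (- ln s)) * (sqrt (- ln s) / sqrt 2) = (2 * A + 1) / (s * sqrt 2)"
    using l0 s by (simp add: field_simps)
  finally have "y * sqrt (ln y) > (2 * A + 1) / (s * sqrt 2)" .
  moreover have "(2 * A + 1) / (s * sqrt 2) \<ge> A / s"
  proof -
    have "sqrt 2 \<le> sqrt (2\<^sup>2)" by (intro real_sqrt_le_mono) simp
    then have "A * sqrt 2 \<le> A * 2" using A by (intro mult_left_mono) auto
    then have "A * sqrt 2 \<le> 2 * A + 1" by simp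
    then show ?thesis using s by (simp add: field_simps)
  qed
  ultimately show False using ya by linarith
qed

lemma has_real_derivative_inverse_mult_sqrt_ln:
  fixes y :: real
  assumes "y > 1"
  shows "((\<lambda>y. 1 / (y * sqrt (ln y))) has_real_derivative
           - (1 / (y\<^sup>2 * sqrt (ln y))) * (1 + 1 / (2 * ln y))) (at y)"
proof -
  have l: "ln y > 0" and sq: "sqrt (ln y) * sqrt (ln y) = ln y" using assms by simp_all
  have "((\<lambda>y. 1 / (y * sqrt (ln y))) has_real_derivative
     - (1 * sqrt (ln y) + y * (inverse y / (2 * sqrt (ln y)))) / (y * sqrt (ln y))\<^sup>2) (at y)"
    using assms l by (auto intro!: derivative_eq_intros simp: power2_eq_square inverse_eq_divide)
  moreover have "- (1 * sqrt (ln y) + y * (inverse y / (2 * sqrt (ln y)))) / (y * sqrt (ln y))\<^sup>2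
      = - (sqrt (ln y) + 1 / (2 * sqrt (ln y))) / (y\<^sup>2 * ln y)"
    using assms l by (simp add: power_mult_distrib field_simps)
  moreover have "\<dots> = - (1 / (y\<^sup>2 * sqrt (ln y))) * (1 + 1 / (2 * ln y))"
    using assms l sq by (simp add: field_simps)
  ultimately show ?thesis by simp
qed

lemma inverse_mult_sqrt_ln_growth_rate:
  fixes y d :: real
  assumes y: "y > 1" and K: "K > 0" and \<nu>: "\<nu> \<ge> 0"
    and d: "d \<ge> y\<^sup>2 * sqrt (ln y) / (16 * K)"
  shows "- (1 / (y\<^sup>2 * sqrt (ln y))) * (1 + 1 / (2 * ln y)) * (- 2 * \<nu> * d) \<ge> \<nu> / (8 * K)"
proof -
  have l: "ln y > 0" using y by simp
  moreover have "0 \<le> y\<^sup>2 * sqrt (ln y) / (16 * K)" using l K by simp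
  ultimately have d0: "d \<ge> 0" using d by linarith
  have "\<nu> / (8 * K) = (2 * \<nu> * (y\<^sup>2 * sqrt (ln y) / (16 * K))) / (y\<^sup>2 * sqrt (ln y))"
    using l K y by (simp add: field_simps)
  also have "\<dots> \<le> (2 * \<nu> * d) / (y\<^sup>2 * sqrt (ln y))"
    using d l \<nu> by (intro divide_right_mono mult_left_mono) auto
  also have "\<dots> \<le> (2 * \<nu> * d) / (y\<^sup>2 * sqrt (ln y)) * (1 + 1 / (2 * ln y))"
  proof -
    have "0 \<le> (2 * \<nu> * d) / (y\<^sup>2 * sqrt (ln y))" using \<nu> d0 l by simp
    moreover have "1 \<le> 1 + 1 / (2 * ln y)" using l by simp
    ultimately show ?thesis by (metis mult_left_mono mult_1_right)
  qed
  also have "\<dots> = - (1 / (y\<^sup>2 * sqrt (ln y))) * (1 + 1 / (2 * ln y)) * (- 2 * \<nu> * d)"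
    by simp
  finally show ?thesis .
qed

definition log_decay_const :: "real \<Rightarrow> real" where
  "log_decay_const K = max (max (exp 1) (16 * K\<^sup>2 + 16 * K + 1)) (2 * (16 * K) + 1)"

lemma log_decay_const_pos: "log_decay_const K > 0"
  unfolding log_decay_const_def by (simp add: less_max_iff_disj)

text \<open>Here D \<ge> Y^2 sqrt (ln Y) / (16 K) for large Y, so 1 / (Y sqrt (ln Y)) grows linearly.\<close>

lemma decay_log:
  fixes Y D :: "real \<Rightarrow> real"
  assumes \<nu>: "\<nu> > 0" and K: "K > 0"
    and dY: "\<And>s. s > 0 \<Longrightarrow> (Y has_real_derivative - 2 * \<nu> * D s) (at s)"
    and D: "\<And>s. s > 0 \<Longrightarrow> D s \<ge> 0"
    and key: "\<And>s r. s > 0 \<Longrightarrow> 0 < r \<Longrightarrow> r < 1/2 \<Longrightarrow> Y s \<le> K / (r\<^sup>2 * sqrt (- ln r)) + 2 * r\<^sup>2 * D s"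
    and t: "t > 0" "\<nu> * t < 1"
  shows "Y t \<le> log_decay_const K / (\<nu> * t * sqrt (- ln (\<nu> * t)))"
proof -
  define Y1 where "Y1 = max (exp 1) (16 * K\<^sup>2 + 16 * K + 1)"
  have Y1e: "Y1 \<ge> exp 1" unfolding Y1_def by simp
  have st: "0 < \<nu> * t" using \<nu> t by simp
  note ss = mult_sqrt_neg_ln_bounds[OF st t(2)]
  show ?thesis
  proof (cases "Y t > Y1")
    case False
    then have "Y t \<le> Y1" by simp
    also have "Y1 \<le> log_decay_const K" unfolding log_decay_const_def Y1_def by simp
    also have "\<dots> \<le> log_decay_const K / (\<nu> * t * sqrt (- ln (\<nu> * t)))"
    proof -
      have "\<nu> * t * sqrt (- ln (\<nu> * t)) \<le> 1"
        using ss(2) real_sqrt_le_1_iff[of "\<nu> * t"] t(2) by linarith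
      then show ?thesis using ss(1) log_decay_const_pos[of K] by (simp add: le_divide_eq)
    qed
    finally show ?thesis .
  next
    case True
    have y1: "y > 1" if "y > Y1" for y using that Y1e by (smt (verit) one_less_exp_iff)
    have rate: "- (1 / ((Y s)\<^sup>2 * sqrt (ln (Y s)))) * (1 + 1 / (2 * ln (Y s))) * (- 2 * \<nu> * D s)
                  \<ge> \<nu> / (8 * K)" if s: "s > 0" "Y s > Y1" for s
      using dissipation_lower_bound_log[OF K _ _ key[OF s(1)]] s(2) y1[OF s(2)] K \<nu>
      by (intro inverse_mult_sqrt_ln_growth_rate) (auto simp: Y1_def)
    have "\<nu> / (8 * K) * t / 2 \<le> 1 / (Y t * sqrt (ln (Y t)))"
    proof (rule decay_comparison[OF dY D _ has_real_derivative_inverse_mult_sqrt_ln[OF y1] _ rate t(1) True])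
      show "0 \<le> 1 / (y * sqrt (ln y))" if "y > Y1" for y using y1[OF that] by simp
    qed (use \<nu> in auto)
    then have "Y t * sqrt (ln (Y t)) \<le> 16 * K / (\<nu> * t)"
      using y1[OF True] st K by (simp add: field_simps)
    then have "Y t \<le> (2 * (16 * K) + 1) / (\<nu> * t * sqrt (- ln (\<nu> * t)))"
      using True Y1e K by (intro le_of_mult_sqrt_ln_le[OF st t(2)]) auto
    also have "\<dots> \<le> log_decay_const K / (\<nu> * t * sqrt (- ln (\<nu> * t)))"
      unfolding log_decay_const_def using ss by (intro divide_right_mono) auto
    finally show ?thesis .
  qed
qed

section \<open>Bounds for the Navier-Stokes vorticity\<close>

lemma NS_enstrophy_decay_powr:
  assumes sol: "NS_sol \<nu> u0 u om" and \<nu>: "\<nu> > 0" and \<alpha>: "0 < \<alpha>" "\<alpha> < 2" and C: "C > 0"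
    and mass: "\<And>r x s. r > 0 \<Longrightarrow> s > 0 \<Longrightarrow> ball_mass om s x r \<le> ennreal (C * r powr \<alpha>)"
    and t: "t > 0" "\<nu> * t < 1"
  shows "enstrophy om t
           \<le> powr_decay_const (36 * C\<^sup>2 * (1/3) powr \<alpha>) \<alpha> / (\<nu> * t) powr ((2 - \<alpha>) / 2)"
proof (rule decay_powr[OF \<nu> \<alpha> _ NS_enstrophy_deriv[OF sol] palinstrophy_nonneg[OF NS_solD(1)[OF sol]] _ t])
  fix s r :: real assume s: "s > 0" and r: "0 < r" "r < 1/2"
  have "enstrophy om s \<le> 36 * (C * r powr \<alpha>) * (C * (1/3) powr \<alpha>) / r\<^sup>2 + 2 * r\<^sup>2 * palinstrophy om s"
    using C r by (intro enstrophy_le_mass_palinstrophy[OF NS_solD(1)[OF sol] s] mass s) auto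
  also have "36 * (C * r powr \<alpha>) * (C * (1/3) powr \<alpha>) / r\<^sup>2 = 36 * C\<^sup>2 * (1/3) powr \<alpha> * r powr (\<alpha> - 2)"
    using r by (simp add: powr_diff powr_realpow[of r 2, simplified] power2_eq_square)
  finally show "enstrophy om s \<le> 36 * C\<^sup>2 * (1/3) powr \<alpha> * r powr (\<alpha> - 2) + 2 * r\<^sup>2 * palinstrophy om s" .
qed (use C in auto)

lemma NS_enstrophy_decay_log:
  assumes sol: "NS_sol \<nu> u0 u om" and \<nu>: "\<nu> > 0" and C: "C > 0"
    and mass: "\<And>r x s. 0 < r \<Longrightarrow> r < 1/2 \<Longrightarrow> s > 0 \<Longrightarrow>
                 ball_mass om s x r \<le> ennreal (C * \<bar>ln r\<bar> powr (-1/2))"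
    and t: "t > 0" "\<nu> * t < 1"
  shows "enstrophy om t
           \<le> log_decay_const (36 * C\<^sup>2 / sqrt (ln 3)) / (\<nu> * t * sqrt (- ln (\<nu> * t)))"
proof (rule decay_log[OF \<nu> _ NS_enstrophy_deriv[OF sol] palinstrophy_nonneg[OF NS_solD(1)[OF sol]] _ t])
  have B: "C * \<bar>ln r\<bar> powr (-1/2) = C / sqrt (- ln r)" if "0 < r" "r < 1" for r
    using that by (simp add: powr_minus_divide powr_half_sqrt[symmetric])
  fix s r :: real assume s: "s > 0" and r: "0 < r" "r < 1/2"
  have "enstrophy om s
      \<le> 36 * (C / sqrt (- ln r)) * (C / sqrt (- ln (1/3))) / r\<^sup>2 + 2 * r\<^sup>2 * palinstrophy om s"
  proof (rule enstrophy_le_mass_palinstrophy[OF NS_solD(1)[OF sol] s])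
    show "ball_mass om s x r \<le> ennreal (C / sqrt (- ln r))" for x
      using mass[OF r s] B[of r] r by simp
    show "ball_mass om s x (1/3) \<le> ennreal (C / sqrt (- ln (1/3)))" for x
      using mass[of "1/3", OF _ _ s] B[of "1/3"] by simp
  qed (use C r in auto)
  also have "36 * (C / sqrt (- ln r)) * (C / sqrt (- ln (1/3))) / r\<^sup>2
             = 36 * C\<^sup>2 / sqrt (ln 3) / (r\<^sup>2 * sqrt (- ln r))"
    by (simp add: ln_div power2_eq_square mult_ac)
  finally show "enstrophy om s \<le> 36 * C\<^sup>2 / sqrt (ln 3) / (r\<^sup>2 * sqrt (- ln r)) + 2 * r\<^sup>2 * palinstrophy om s" .
qed (use C in auto)

lemma nn_integral_powr_decay_le:
  fixes L :: "real \<Rightarrow> ennreal"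
  assumes L: "\<And>\<tau>. 0 < \<tau> \<Longrightarrow> \<tau> < T \<Longrightarrow> L \<tau> \<le> ennreal (c / (\<nu> * \<tau>) powr \<gamma>)"
    and \<nu>: "\<nu> > 0" and T: "T > 0" and \<gamma>: "0 \<le> \<gamma>" "\<gamma> < 1" and c: "c \<ge> 0"
  shows "ennreal \<nu> * (\<integral>\<^sup>+ \<tau>\<in>{0<..<T}. L \<tau> \<partial>lborel) \<le> ennreal (c / (1 - \<gamma>) * (\<nu> * T) powr (1 - \<gamma>))"
proof -
  let ?c = "c * \<nu> powr (- \<gamma>)"
  have hi: "((\<lambda>\<tau>. ?c * \<tau> powr (- \<gamma>)) has_integral ?c * (T powr (- \<gamma> + 1) / (- \<gamma> + 1))) {0..T}"
    using \<gamma> T by (intro has_integral_mult_right has_integral_powr_from_0) auto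
  have "(\<integral>\<^sup>+ \<tau>\<in>{0<..<T}. L \<tau> \<partial>lborel) \<le> (\<integral>\<^sup>+ \<tau>. ennreal (?c * \<tau> powr (- \<gamma>)) * indicator {0..T} \<tau> \<partial>lborel)"
  proof (intro nn_integral_mono)
    fix \<tau>
    have "c / (\<nu> * \<tau>) powr \<gamma> = ?c * \<tau> powr (- \<gamma>)" if "\<tau> > 0"
      using \<nu> that by (simp add: powr_mult powr_minus_divide)
    then show "L \<tau> * indicator {0<..<T} \<tau> \<le> ennreal (?c * \<tau> powr (- \<gamma>)) * indicator {0..T} \<tau>"
      using L[of \<tau>] by (auto split: split_indicator)
  qed
  also have "\<dots> = ennreal (?c * (T powr (- \<gamma> + 1) / (- \<gamma> + 1)))"
    by (rule nn_integral_has_integral_lebesgue'[OF _ hi]) (use c in auto)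
  finally have "ennreal \<nu> * (\<integral>\<^sup>+ \<tau>\<in>{0<..<T}. L \<tau> \<partial>lborel)
      \<le> ennreal \<nu> * ennreal (?c * (T powr (- \<gamma> + 1) / (- \<gamma> + 1)))"
    by (intro mult_left_mono) auto
  also have "\<dots> = ennreal (\<nu> * (?c * (T powr (- \<gamma> + 1) / (- \<gamma> + 1))))"
    using \<nu> by (simp add: ennreal_mult'[symmetric])
  also have "\<nu> * (?c * (T powr (- \<gamma> + 1) / (- \<gamma> + 1))) = c / (1 - \<gamma>) * (\<nu> * T) powr (1 - \<gamma>)"
  proof -
    have "\<nu> * \<nu> powr (- \<gamma>) = \<nu> powr (1 - \<gamma>)" using \<nu> by (simp add: powr_diff powr_minus_divide)
    then show ?thesis using \<nu> T by (simp add: powr_mult field_simps)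
  qed
  finally show ?thesis .
qed

lemma nn_integral_log_decay_le:
  fixes L :: "real \<Rightarrow> ennreal"
  assumes L: "\<And>\<tau>. \<delta> < \<tau> \<Longrightarrow> \<tau> < T \<Longrightarrow> L \<tau> \<le> ennreal (c / (\<nu> * \<tau> * sqrt (- ln (\<nu> * \<tau>))))"
    and \<nu>: "\<nu> > 0" and \<delta>: "0 < \<delta>" "\<delta> < T" and nT: "\<nu> * T < 1" and c: "c \<ge> 0"
  shows "ennreal \<nu> * (\<integral>\<^sup>+ \<tau>\<in>{\<delta><..<T}. L \<tau> \<partial>lborel) \<le> ennreal (c * ln (T / \<delta>) / sqrt \<bar>ln (\<nu> * T)\<bar>)"
proof -
  have lT: "- ln (\<nu> * T) > 0" using nT \<nu> \<delta> by simp
  define c' where "c' = c / (\<nu> * sqrt (- ln (\<nu> * T)))"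
  have c': "c' \<ge> 0" unfolding c'_def using c \<nu> lT by simp
  have hi: "((\<lambda>\<tau>. c' * (1 / \<tau>)) has_integral c' * (ln T - ln \<delta>)) {\<delta>..T}"
  proof (intro has_integral_mult_right fundamental_theorem_of_calculus)
    fix \<tau> assume "\<tau> \<in> {\<delta>..T}"
    then show "(ln has_vector_derivative 1 / \<tau>) (at \<tau> within {\<delta>..T})"
      using \<delta> DERIV_ln_divide[of \<tau>]
      by (auto intro!: has_vector_derivative_at_within has_field_derivative_at_within
          simp: has_real_derivative_iff_has_vector_derivative[symmetric])
  qed (use \<delta> in auto)
  have "(\<integral>\<^sup>+ \<tau>\<in>{\<delta><..<T}. L \<tau> \<partial>lborel) \<le> (\<integral>\<^sup>+ \<tau>. ennreal (c' * (1 / \<tau>)) * indicator {\<delta>..T} \<tau> \<partial>lborel)"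
  proof (intro nn_integral_mono)
    fix \<tau>
    have bound: "c / (\<nu> * \<tau> * sqrt (- ln (\<nu> * \<tau>))) \<le> c' * (1 / \<tau>)" if \<tau>: "\<delta> < \<tau>" "\<tau> < T"
    proof -
      have "\<nu> * \<tau> > 0" "\<nu> * \<tau> < \<nu> * T" using \<nu> \<tau> \<delta> by auto
      then have "sqrt (- ln (\<nu> * T)) \<le> sqrt (- ln (\<nu> * \<tau>))" by simp
      moreover have "\<nu> * \<tau> < 1" using \<open>\<nu> * \<tau> < \<nu> * T\<close> nT by simp
      ultimately have "c / (\<nu> * \<tau> * sqrt (- ln (\<nu> * \<tau>))) \<le> c / (\<nu> * \<tau> * sqrt (- ln (\<nu> * T)))"
        using c \<nu> \<tau> \<delta> lT by (intro divide_left_mono mult_left_mono mult_pos_pos) auto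
      then show ?thesis unfolding c'_def by (simp add: mult_ac)
    qed
    have "L \<tau> \<le> ennreal (c' * (1 / \<tau>))" if "\<delta> < \<tau>" "\<tau> < T"
      using order.trans[OF L[OF that] ennreal_leI[OF bound[OF that]]] .
    then show "L \<tau> * indicator {\<delta><..<T} \<tau> \<le> ennreal (c' * (1 / \<tau>)) * indicator {\<delta>..T} \<tau>"
      by (auto split: split_indicator)
  qed
  also have "\<dots> = ennreal (c' * (ln T - ln \<delta>))"
    by (rule nn_integral_has_integral_lebesgue'[OF _ hi]) (use c' \<delta> in auto)
  finally have "ennreal \<nu> * (\<integral>\<^sup>+ \<tau>\<in>{\<delta><..<T}. L \<tau> \<partial>lborel) \<le> ennreal \<nu> * ennreal (c' * (ln T - ln \<delta>))"
    by (intro mult_left_mono) auto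
  also have "\<dots> = ennreal (\<nu> * (c' * (ln T - ln \<delta>)))"
    using \<nu> by (simp add: ennreal_mult'[symmetric])
  also have "\<nu> * (c' * (ln T - ln \<delta>)) = c * ln (T / \<delta>) / sqrt \<bar>ln (\<nu> * T)\<bar>"
    unfolding c'_def using \<nu> \<delta> lT by (simp add: ln_div)
  finally show ?thesis .
qed

lemma vorticity_bounds_powr:
  fixes u0 :: "real \<Rightarrow> real \<times> real \<Rightarrow> real \<times> real"
    and u :: "real \<Rightarrow> (real \<times> real) \<times> real \<Rightarrow> real \<times> real"
    and om :: "real \<Rightarrow> (real \<times> real) \<times> real \<Rightarrow> real"
  assumes sol: "\<And>\<nu>. \<nu> > 0 \<Longrightarrow> NS_sol \<nu> (u0 \<nu>) (u \<nu>) (om \<nu>)"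
    and mass: "\<forall>r>0. \<forall>x \<nu> t. \<nu> > 0 \<and> t > 0 \<longrightarrow> ball_mass (om \<nu>) t x r \<le> ennreal (C * r powr \<alpha>)"
    and \<alpha>: "0 < \<alpha>" "\<alpha> < 2" and C: "C > 0"
  shows "\<exists>C'>0. \<forall>\<nu> t T. \<nu> > 0 \<and> t > 0 \<and> T > 0 \<and> \<nu> * t < 1 \<and> \<nu> * T < 1 \<longrightarrow>
          L2sq (om \<nu>) t \<le> ennreal (C' / (\<nu> * t) powr ((2 - \<alpha>) / 2)) \<and>
          ennreal \<nu> * (\<integral>\<^sup>+ \<tau>\<in>{0<..<T}. L2sq (om \<nu>) \<tau> \<partial>lborel) \<le> ennreal (C' * (\<nu> * T) powr (\<alpha> / 2))"
proof -
  define c where "c = powr_decay_const (36 * C\<^sup>2 * (1/3) powr \<alpha>) \<alpha>"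
  have c: "c > 0" unfolding c_def using C by (intro powr_decay_const_pos) simp
  have L: "L2sq (om \<nu>) \<tau> \<le> ennreal (c / (\<nu> * \<tau>) powr ((2 - \<alpha>) / 2))"
    if \<nu>: "\<nu> > 0" "\<tau> > 0" "\<nu> * \<tau> < 1" for \<nu> \<tau>
    unfolding L2sq_eq_enstrophy[OF NS_solD(1)[OF sol[OF \<nu>(1)]] \<nu>(2)] c_def
    by (intro ennreal_leI NS_enstrophy_decay_powr[OF sol[OF \<nu>(1)] \<nu>(1) \<alpha> C _ \<nu>(2,3)])
      (use mass \<nu>(1) in auto)
  show ?thesis
  proof (intro exI[of _ "c * (1 + 2 / \<alpha>)"] conjI allI impI)
    show "c * (1 + 2 / \<alpha>) > 0" using c \<alpha> by (intro mult_pos_pos add_pos_pos) auto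
    fix \<nu> t T :: real assume A: "\<nu> > 0 \<and> t > 0 \<and> T > 0 \<and> \<nu> * t < 1 \<and> \<nu> * T < 1"
    have "c / (\<nu> * t) powr ((2 - \<alpha>) / 2) \<le> c * (1 + 2 / \<alpha>) / (\<nu> * t) powr ((2 - \<alpha>) / 2)"
      using c \<alpha> A by (intro divide_right_mono) auto
    then show "L2sq (om \<nu>) t \<le> ennreal (c * (1 + 2 / \<alpha>) / (\<nu> * t) powr ((2 - \<alpha>) / 2))"
      using L[of \<nu> t] A order.trans ennreal_leI by blast
    have "ennreal \<nu> * (\<integral>\<^sup>+ \<tau>\<in>{0<..<T}. L2sq (om \<nu>) \<tau> \<partial>lborel)
        \<le> ennreal (c / (1 - (2 - \<alpha>) / 2) * (\<nu> * T) powr (1 - (2 - \<alpha>) / 2))"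
    proof (rule nn_integral_powr_decay_le)
      show "L2sq (om \<nu>) \<tau> \<le> ennreal (c / (\<nu> * \<tau>) powr ((2 - \<alpha>) / 2))" if "0 < \<tau>" "\<tau> < T" for \<tau>
        using A that by (intro L) (auto intro: le_less_trans[of _ "\<nu> * T"])
    qed (use A \<alpha> c in auto)
    also have "c / (1 - (2 - \<alpha>) / 2) * (\<nu> * T) powr (1 - (2 - \<alpha>) / 2) = c * (2 / \<alpha>) * (\<nu> * T) powr (\<alpha> / 2)"
    proof -
      have e: "1 - (2 - \<alpha>) / 2 = \<alpha> / 2" by (simp add: field_simps)
      show ?thesis unfolding e by simp
    qed
    also have "\<dots> \<le> c * (1 + 2 / \<alpha>) * (\<nu> * T) powr (\<alpha> / 2)"
      using c \<alpha> by (intro mult_right_mono mult_left_mono) auto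
    finally show "ennreal \<nu> * (\<integral>\<^sup>+ \<tau>\<in>{0<..<T}. L2sq (om \<nu>) \<tau> \<partial>lborel)
        \<le> ennreal (c * (1 + 2 / \<alpha>) * (\<nu> * T) powr (\<alpha> / 2))"
      by (simp add: ennreal_leI)
  qed
qed

lemma vorticity_bounds_log:
  fixes u0 :: "real \<Rightarrow> real \<times> real \<Rightarrow> real \<times> real"
    and u :: "real \<Rightarrow> (real \<times> real) \<times> real \<Rightarrow> real \<times> real"
    and om :: "real \<Rightarrow> (real \<times> real) \<times> real \<Rightarrow> real"
  assumes sol: "\<And>\<nu>. \<nu> > 0 \<Longrightarrow> NS_sol \<nu> (u0 \<nu>) (u \<nu>) (om \<nu>)"
    and mass: "\<forall>r. 0 < r \<and> r < 1/2 \<longrightarrow> (\<forall>x \<nu> t. \<nu> > 0 \<and> t > 0 \<longrightarrow>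
                 ball_mass (om \<nu>) t x r \<le> ennreal (C * \<bar>ln r\<bar> powr (-1/2)))"
    and C: "C > 0"
  shows "(\<exists>C'>0. \<forall>\<nu> t. \<nu> > 0 \<and> t > 0 \<and> \<nu> * t < 1 \<longrightarrow>
          L2sq (om \<nu>) t \<le> ennreal (C' / (\<nu> * t * sqrt \<bar>ln (\<nu> * t)\<bar>))) \<and>
      (\<exists>C''>0. \<forall>\<delta> \<nu> T. \<delta> > 0 \<and> \<nu> > 0 \<and> T > \<delta> \<and> \<nu> * T < 1 \<longrightarrow>
          ennreal \<nu> * (\<integral>\<^sup>+ \<tau>\<in>{\<delta><..<T}. L2sq (om \<nu>) \<tau> \<partial>lborel)
            \<le> ennreal (C'' * ln (T / \<delta>) / sqrt \<bar>ln (\<nu> * T)\<bar>))"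
proof -
  define c where "c = log_decay_const (36 * C\<^sup>2 / sqrt (ln 3))"
  have c: "c > 0" unfolding c_def by (rule log_decay_const_pos)
  have L: "L2sq (om \<nu>) \<tau> \<le> ennreal (c / (\<nu> * \<tau> * sqrt (- ln (\<nu> * \<tau>))))"
    if \<nu>: "\<nu> > 0" "\<tau> > 0" "\<nu> * \<tau> < 1" for \<nu> \<tau>
    unfolding L2sq_eq_enstrophy[OF NS_solD(1)[OF sol[OF \<nu>(1)]] \<nu>(2)] c_def
    by (intro ennreal_leI NS_enstrophy_decay_log[OF sol[OF \<nu>(1)] \<nu>(1) C _ \<nu>(2,3)])
      (use mass \<nu>(1) in auto)
  show ?thesis
  proof (intro conjI exI[of _ c] allI impI c)
    fix \<nu> t :: real assume A: "\<nu> > 0 \<and> t > 0 \<and> \<nu> * t < 1"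
    then have "\<bar>ln (\<nu> * t)\<bar> = - ln (\<nu> * t)" by simp
    then show "L2sq (om \<nu>) t \<le> ennreal (c / (\<nu> * t * sqrt \<bar>ln (\<nu> * t)\<bar>))"
      using L A by simp
  next
    fix \<delta> \<nu> T :: real assume A: "\<delta> > 0 \<and> \<nu> > 0 \<and> T > \<delta> \<and> \<nu> * T < 1"
    show "ennreal \<nu> * (\<integral>\<^sup>+ \<tau>\<in>{\<delta><..<T}. L2sq (om \<nu>) \<tau> \<partial>lborel)
            \<le> ennreal (c * ln (T / \<delta>) / sqrt \<bar>ln (\<nu> * T)\<bar>)"
    proof (rule nn_integral_log_decay_le)
      show "L2sq (om \<nu>) \<tau> \<le> ennreal (c / (\<nu> * \<tau> * sqrt (- ln (\<nu> * \<tau>))))" if "\<delta> < \<tau>" "\<tau> < T" for \<tau>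
        using A that by (intro L) (auto intro: le_less_trans[of _ "\<nu> * T"])
    qed (use A c in auto)
  qed
qed

theorem theorem1p1:
  fixes u0 :: "real \<Rightarrow> real \<times> real \<Rightarrow> real \<times> real"
    and u :: "real \<Rightarrow> (real \<times> real) \<times> real \<Rightarrow> real \<times> real"
    and om :: "real \<Rightarrow> (real \<times> real) \<times> real \<Rightarrow> real"
  assumes init: "\<And>\<nu>. \<nu> > 0 \<Longrightarrow> L2_divfree (u0 \<nu>)"
    and bounded: "\<exists>K. \<forall>\<nu>>0. vort_TV_le (u0 \<nu>) K"
    and sol: "\<And>\<nu>. \<nu> > 0 \<Longrightarrow> NS_sol \<nu> (u0 \<nu>) (u \<nu>) (om \<nu>)"
  shows
    "(\<forall>\<alpha> C. 0 < \<alpha> \<and> \<alpha> < 2 \<and> C > 0 \<and>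
        (\<forall>r>0. \<forall>x \<nu> t. \<nu> > 0 \<and> t > 0 \<longrightarrow>
            ball_mass (om \<nu>) t x r \<le> ennreal (C * r powr \<alpha>)) \<longrightarrow>
      (\<exists>C'>0. \<forall>\<nu> t T. \<nu> > 0 \<and> t > 0 \<and> T > 0 \<and> \<nu> * t < 1 \<and> \<nu> * T < 1 \<longrightarrow>
          L2sq (om \<nu>) t \<le> ennreal (C' / (\<nu> * t) powr ((2 - \<alpha>) / 2)) \<and>
          ennreal \<nu> * (\<integral>\<^sup>+ \<tau>\<in>{0<..<T}. L2sq (om \<nu>) \<tau> \<partial>lborel)
            \<le> ennreal (C' * (\<nu> * T) powr (\<alpha> / 2))))
   \<and>
    (\<forall>C. C > 0 \<and>
        (\<forall>r. 0 < r \<and> r < 1/2 \<longrightarrow> (\<forall>x \<nu> t. \<nu> > 0 \<and> t > 0 \<longrightarrow>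
            ball_mass (om \<nu>) t x r \<le> ennreal (C * \<bar>ln r\<bar> powr (-1/2)))) \<longrightarrow>
      (\<exists>C'>0. \<forall>\<nu> t. \<nu> > 0 \<and> t > 0 \<and> \<nu> * t < 1 \<longrightarrow>
          L2sq (om \<nu>) t \<le> ennreal (C' / (\<nu> * t * sqrt \<bar>ln (\<nu> * t)\<bar>))) \<and>
      (\<exists>C''>0. \<forall>\<delta> \<nu> T. \<delta> > 0 \<and> \<nu> > 0 \<and> T > \<delta> \<and> \<nu> * T < 1 \<longrightarrow>
          ennreal \<nu> * (\<integral>\<^sup>+ \<tau>\<in>{\<delta><..<T}. L2sq (om \<nu>) \<tau> \<partial>lborel)
            \<le> ennreal (C'' * ln (T / \<delta>) / sqrt \<bar>ln (\<nu> * T)\<bar>)))"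
  by (rule conjI; intro allI impI; elim conjE;
      rule vorticity_bounds_powr[OF sol] vorticity_bounds_log[OF sol]; assumption)

end
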